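(* Let $f:[0,1]\to\mathbb{R}$ be a $C^2$ function such that $f'(0)\ge 0$, $\inf_{[0,1]} f''>0$, $f'''$ exists and is bounded on $(0,1)$, and $f'f'''-(f'')^2\le 0$ on $(0,1)$. Then there exist a compact set $K\subseteq\mathbb{R}^2$ of two-dimensional Lebesgue measure $0$ and a constant $c>0$ such that for every $a\in[1,2]$, $K$ contains a translated copy of a piece of length at least $c$ of the graph of $x\mapsto af(x)$, i.e. there exist $(x_1,x_2)\in\mathbb{R}^2$ and an interval $I_a\subseteq[0,1]$ of length at least $c$ with $\{(x_1+t,\,x_2+af(t)):t\in I_a\}\subseteq K$. Moreover, there is a constant $C$ such that $|K(\delta)|\le C(\log\delta^{-1})^{-2}$ for all sufficiently small $\delta>0$. Consequently, for all $p,q\in[1,\infty]$ there is $c_{p,q}>0$ independent of $\delta$ with $$R(p,q,\delta)\ge c_{p,q}(\log\delta^{-1})^{2/p}$$ for all sufficiently small $\delta>0$. In particular, $R(p,q)=\infty$ whenever $p<\infty$.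
   Context: For $S\subseteq\mathbb{R}^2$ and $\delta>0$, the vertical $\delta$-thickening is $S(\delta):=\{x+(0,\varepsilon): x\in S,\ -\delta\le\varepsilon\le\delta\}$. For $g:\mathbb{R}^2\to\mathbb{C}$ and $a\in[1,2]$ define $$\mathcal R g(a)=\sup_{(x_1,x_2)\in\mathbb{R}^2}\int_0^1|g(x_1+t,\,x_2+af(t))|\,dt,\qquad \mathcal R_\delta g(a)=\sup_{(x_1,x_2)\in\mathbb{R}^2}(2\delta)^{-1}\int_0^1\int_{-\delta}^{\delta}|g(x_1+t,\,x_2+af(t)+s)|\,ds\,dt,$$ and for $p,q\in[1,\infty]$ let $R(p,q)=\sup_{g\ne0}\|\mathcal R g\|_{L^q([1,2])}/\|g\|_{L^p(\mathbb{R}^2)}$ and $R(p,q,\delta)=\sup_{g\ne0}\|\mathcal R_\delta g\|_{L^q([1,2])}/\|g\|_{L^p(\mathbb{R}^2)}$. $|\cdot|$ denotes Lebesgue measure. *)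

theory Defs
  imports "HOL-Analysis.Analysis"
begin

text \<open>Real powers of extended nonnegative reals (used with positive exponents only).\<close>
definition enn_powr :: "ennreal \<Rightarrow> real \<Rightarrow> ennreal" where
  "enn_powr x r = (if x = top then top else ennreal (enn2real x powr r))"

definition ess_sup_enn :: "'a measure \<Rightarrow> ('a \<Rightarrow> ennreal) \<Rightarrow> ennreal" where
  "ess_sup_enn M h = Inf {c. AE x in M. h x \<le> c}"

definition Lp_norm :: "'a measure \<Rightarrow> ennreal \<Rightarrow> ('a \<Rightarrow> ennreal) \<Rightarrow> ennreal" where
  "Lp_norm M p h =
     (if p = top then ess_sup_enn M h
      else enn_powr (\<integral>\<^sup>+ x. enn_powr (h x) (enn2real p) \<partial>M) (1 / enn2real p))"

definition vthick :: "(real \<times> real) set \<Rightarrow> real \<Rightarrow> (real \<times> real) set" where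
  "vthick S \<delta> = {x + (0, \<epsilon>) | x \<epsilon>. x \<in> S \<and> -\<delta> \<le> \<epsilon> \<and> \<epsilon> \<le> \<delta>}"

definition Rop :: "(real \<Rightarrow> real) \<Rightarrow> (real \<times> real \<Rightarrow> complex) \<Rightarrow> real \<Rightarrow> ennreal" where
  "Rop f g a = (SUP x \<in> (UNIV :: (real \<times> real) set).
      \<integral>\<^sup>+ t. ennreal (norm (g (fst x + t, snd x + a * f t))) \<partial>(lebesgue_on {0..1}))"

definition Rop_delta :: "(real \<Rightarrow> real) \<Rightarrow> real \<Rightarrow> (real \<times> real \<Rightarrow> complex) \<Rightarrow> real \<Rightarrow> ennreal" where
  "Rop_delta f \<delta> g a = (SUP x \<in> (UNIV :: (real \<times> real) set).
      ennreal (1 / (2 * \<delta>)) *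
      (\<integral>\<^sup>+ t. (\<integral>\<^sup>+ s. ennreal (norm (g (fst x + t, snd x + a * f t + s))) \<partial>(lebesgue_on {-\<delta>..\<delta>}))
        \<partial>(lebesgue_on {0..1})))"

definition Lp_test :: "ennreal \<Rightarrow> (real \<times> real \<Rightarrow> complex) set" where
  "Lp_test p = {g. g \<in> borel_measurable borel \<and>
      Lp_norm lebesgue p (\<lambda>x. ennreal (norm (g x))) \<noteq> 0 \<and>
      Lp_norm lebesgue p (\<lambda>x. ennreal (norm (g x))) < top}"

definition Rpq :: "(real \<Rightarrow> real) \<Rightarrow> ennreal \<Rightarrow> ennreal \<Rightarrow> ennreal" where
  "Rpq f p q = (SUP g \<in> Lp_test p.
      Lp_norm (lebesgue_on {1..2}) q (Rop f g) / Lp_norm lebesgue p (\<lambda>x. ennreal (norm (g x))))"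

definition Rpq_delta :: "(real \<Rightarrow> real) \<Rightarrow> ennreal \<Rightarrow> ennreal \<Rightarrow> real \<Rightarrow> ennreal" where
  "Rpq_delta f p q \<delta> = (SUP g \<in> Lp_test p.
      Lp_norm (lebesgue_on {1..2}) q (Rop_delta f \<delta> g) / Lp_norm lebesgue p (\<lambda>x. ennreal (norm (g x))))"

end

theory Submission
  imports Defs "HOL-Library.Discrete_Functions"
begin

(* Split the dilations [1, 2] into M short blocks. Inside a block, start from the curve
   u \<mapsto> A f u and at step n either do nothing or, according to a binary digit, raise the
   dilation by h_n = 2^-(n+1) / M while translating the curve so that it keeps second order
   contact with the previous one at a pivot abscissa r_n. As f'' \<ge> m > 0 the translation is
   O(h_n), and the curve moves by O(h_n (u - r_n)^2 + h_n^2) at abscissa u. Every dilation is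
   reached along some digit sequence, so the closure K of all limit curves contains a piece of
   every dilate a f.
   During the steps 2^b \<le> k < 2^(b+1) the pivots sweep a grid of mesh 2^-b, and near r_k all
   later steps together move a curve by only O(h_k 4^-b). Hence K is covered by M 2^b 2^k bands
   of width 2^-b and height O(h_k 4^-b + \<delta>), of total area O(4^-b) as long as
   \<delta> \<le> 2^-(2^(b+1)+2b). This gives |K(\<delta>)| = O((log 1/\<delta>)^-2) and |K| = 0. Testing
   the maximal operators with the indicator of K(\<delta>), and with a unit square plus a large
   multiple of the indicator of K, yields the lower bounds for R(p,q,\<delta>) and R(p,q) = \<infinity>. *)

section \<open>Real-variable estimates\<close>

lemma lipschitz_on_Icc_if_deriv_bounded:
  fixes \<phi> \<phi>' :: "real \<Rightarrow> real"
  assumes cont: "continuous_on {a..b} \<phi>"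
    and deriv: "\<And>x. x \<in> {a<..<b} \<Longrightarrow> (\<phi> has_real_derivative \<phi>' x) (at x)"
    and bound: "\<And>x. x \<in> {a<..<b} \<Longrightarrow> \<bar>\<phi>' x\<bar> \<le> C" and C: "0 \<le> C"
  shows "C-lipschitz_on {a..b} \<phi>"
proof (rule lipschitz_on_leI[OF _ C])
  fix v w assume vw: "v \<in> {a..b}" "w \<in> {a..b}" "v \<le> w"
  show "dist (\<phi> v) (\<phi> w) \<le> C * dist v w"
  proof (cases "v = w")
    case False
    with vw have lt: "v < w" by simp
    have inner: "x \<in> {a<..<b}" if "v < x" "x < w" for x
      using that vw by auto
    have "\<phi> differentiable (at x)" if "v < x" "x < w" for x
      using deriv[OF inner[OF that]] real_differentiable_def by blast
    from MVT[OF lt continuous_on_subset[OF cont] this]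
    obtain l z where z: "v < z" "z < w" "DERIV \<phi> z :> l" "\<phi> w - \<phi> v = (w - v) * l"
      using vw by auto
    have "l = \<phi>' z" using DERIV_unique[OF z(3) deriv[OF inner[OF z(1,2)]]] .
    then have "dist (\<phi> v) (\<phi> w) = \<bar>(w - v) * \<phi>' z\<bar>"
      using z(4) by (simp add: dist_real_def abs_minus_commute)
    also have "\<dots> = \<bar>\<phi>' z\<bar> * (w - v)"
      using lt by (simp add: abs_mult)
    also have "\<dots> \<le> C * (w - v)"
      using bound[OF inner[OF z(1,2)]] lt by (intro mult_right_mono) auto
    finally show ?thesis using lt by (simp add: dist_real_def)
  qed simp
qed

lemma taylor_remainder_le_if_deriv_lipschitz:
  fixes \<phi> \<phi>' :: "real \<Rightarrow> real"
  assumes cont: "continuous_on {a..b} \<phi>"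
    and deriv: "\<And>x. x \<in> {a<..<b} \<Longrightarrow> (\<phi> has_real_derivative \<phi>' x) (at x)"
    and lip: "L-lipschitz_on {a..b} \<phi>'"
    and v: "v \<in> {a..b}" and w: "w \<in> {a..b}"
  shows "\<bar>\<phi> v - \<phi> w - \<phi>' w * (v - w)\<bar> \<le> L * (v - w)\<^sup>2"
proof -
  define \<psi> where "\<psi> s = \<phi> s - \<phi>' w * s" for s
  have sub: "{min v w..max v w} \<subseteq> {a..b}" "{min v w<..<max v w} \<subseteq> {a<..<b}"
    using v w by auto
  have "(L * \<bar>v - w\<bar>)-lipschitz_on {min v w..max v w} \<psi>"
  proof (rule lipschitz_on_Icc_if_deriv_bounded)
    show "continuous_on {min v w..max v w} \<psi>"
      unfolding \<psi>_def by (intro continuous_intros continuous_on_subset[OF cont sub(1)])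
    show "(\<psi> has_real_derivative \<phi>' x - \<phi>' w) (at x)" if "x \<in> {min v w<..<max v w}" for x
      unfolding \<psi>_def using deriv[of x] that sub(2) by (auto intro!: derivative_eq_intros)
    show "\<bar>\<phi>' x - \<phi>' w\<bar> \<le> L * \<bar>v - w\<bar>" if "x \<in> {min v w<..<max v w}" for x
    proof -
      have "\<bar>\<phi>' x - \<phi>' w\<bar> \<le> L * \<bar>x - w\<bar>"
        using lipschitz_onD[OF lip, of x w] that sub(2) w by (auto simp: dist_real_def)
      also have "\<dots> \<le> L * \<bar>v - w\<bar>"
        using that lipschitz_on_nonneg[OF lip] by (intro mult_left_mono) auto
      finally show ?thesis .
    qed
    show "0 \<le> L * \<bar>v - w\<bar>" using lipschitz_on_nonneg[OF lip] by simp
  qed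
  then have "\<bar>\<psi> v - \<psi> w\<bar> \<le> L * \<bar>v - w\<bar> * \<bar>v - w\<bar>"
    using v w by (auto simp: dist_real_def dest: lipschitz_onD[of _ _ _ v w])
  also have "\<dots> = L * (v - w)\<^sup>2"
    by (simp add: power2_eq_square)
  moreover have "\<phi> v - \<phi> w - \<phi>' w * (v - w) = \<psi> v - \<psi> w"
    unfolding \<psi>_def by (simp add: algebra_simps)
  ultimately show ?thesis by (simp only:)
qed

lemma convergent_if_increments_summable:
  fixes s :: "nat \<Rightarrow> 'a::banach"
  assumes "\<And>n. norm (s (Suc n) - s n) \<le> c n" and "summable c"
  shows "convergent s"
proof -
  have "summable (\<lambda>n. s (Suc n) - s n)"
    by (rule summable_comparison_test[OF _ assms(2)]) (use assms(1) in auto)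
  then have "(\<lambda>n. (\<Sum>i<n. s (Suc i) - s i) + s 0) \<longlonglongrightarrow> (\<Sum>n. s (Suc n) - s n) + s 0"
    by (intro tendsto_add summable_LIMSEQ tendsto_const)
  then show ?thesis
    unfolding sum_lessThan_telescope convergent_def by auto
qed

section \<open>Dyadic bookkeeping\<close>

(* On the block 2^c \<le> i < 2^(c+1) the sequence runs through the grid j / 2^c, forwards for
   even c and backwards for odd c, so consecutive values never jump by more than 2^-c. *)
definition zigzag :: "nat \<Rightarrow> real" where
  "zigzag i = (let c = floor_log i; t = real (i - 2 ^ c) / 2 ^ c in if even c then t else 1 - t)"

lemma zigzag_block:
  assumes "2 ^ c \<le> i" "i < 2 ^ Suc c"
  shows "zigzag i = (let t = real (i - 2 ^ c) / 2 ^ c in if even c then t else 1 - t)"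
proof -
  have "floor_log i = c" using assms by (intro floor_log_eqI) (auto intro: Nat.gr0I)
  then show ?thesis unfolding zigzag_def by simp
qed

lemma zigzag_range: "zigzag i \<in> {0..1}"
proof -
  have "i - 2 ^ floor_log i \<le> 2 ^ floor_log i"
    using floor_log_exp2_gt[of i] by simp
  then have "real (i - 2 ^ floor_log i) \<le> 2 ^ floor_log i"
    by (metis of_nat_le_iff of_nat_numeral of_nat_power)
  then show ?thesis unfolding zigzag_def Let_def by auto
qed

lemma zigzag_Suc_diff:
  assumes "2 ^ b \<le> i"
  shows "\<bar>zigzag (Suc i) - zigzag i\<bar> \<le> 1 / 2 ^ b"
proof -
  define c where "c = floor_log i"
  have "0 < i" using assms less_le_trans[of 0 "2 ^ b" i] by simp
  then have ci: "2 ^ c \<le> i" "i < 2 ^ Suc c"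
    using floor_log_exp2_le floor_log_exp2_gt[of i] unfolding c_def by auto
  have "b \<le> c" unfolding c_def using floor_log_le_iff[OF assms] by simp
  then have bc: "1 / (2::real) ^ c \<le> 1 / 2 ^ b" by (intro divide_left_mono) (auto intro: power_increasing)
  have "\<bar>zigzag (Suc i) - zigzag i\<bar> = 1 / 2 ^ c"
  proof (cases "Suc i < 2 ^ Suc c")
    case True
    have "real (Suc i - 2 ^ c) = real (i - 2 ^ c) + 1" using ci by (simp add: Suc_diff_le)
    then show ?thesis
      using zigzag_block[OF ci] zigzag_block[of c "Suc i"] ci True
      by (auto simp: Let_def diff_divide_distrib[symmetric])
  next
    case False
    then have last: "Suc i = 2 ^ Suc c" using ci by simp
    then have "i - 2 ^ c = 2 ^ c - 1" by simp
    then have "real (i - 2 ^ c) = 2 ^ c - 1" by (simp add: of_nat_diff)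
    then show ?thesis
      using zigzag_block[OF ci] zigzag_block[of "Suc c" "Suc i"] last
      by (auto simp: Let_def diff_divide_distrib)
  qed
  with bc show ?thesis by simp
qed

lemma zigzag_diff_le:
  assumes "2 ^ b \<le> k" "k \<le> i"
  shows "\<bar>zigzag i - zigzag k\<bar> \<le> real (i - k) / 2 ^ b"
  using assms(2)
proof (induction i rule: dec_induct)
  case (step n)
  have "\<bar>zigzag (Suc n) - zigzag k\<bar> \<le> \<bar>zigzag (Suc n) - zigzag n\<bar> + \<bar>zigzag n - zigzag k\<bar>"
    by linarith
  also have "\<dots> \<le> 1 / 2 ^ b + real (n - k) / 2 ^ b"
    using zigzag_Suc_diff[of b n] step assms(1) by (intro add_mono) auto
  also have "\<dots> = real (Suc n - k) / 2 ^ b"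
    using step(1) by (simp add: Suc_diff_le add_divide_distrib)
  finally show ?case .
qed simp

lemma zigzag_dense:
  assumes "z \<in> {0..1}"
  shows "\<exists>k \<in> {2 ^ b..<2 ^ Suc b}. \<bar>z - zigzag k\<bar> \<le> 1 / 2 ^ b"
proof -
  define y where "y = (if even b then z else 1 - z)"
  have y: "0 \<le> y" "y \<le> 1" using assms unfolding y_def by auto
  define j where "j = min (nat \<lfloor>y * 2 ^ b\<rfloor>) (2 ^ b - 1)"
  have j: "j < 2 ^ b" unfolding j_def by (simp add: min.strict_coboundedI2)
  have "real j \<le> real (nat \<lfloor>y * 2 ^ b\<rfloor>)" unfolding j_def by simp
  also have "\<dots> \<le> y * 2 ^ b" using y by (simp add: of_nat_nat)
  finally have "real j \<le> y * 2 ^ b" .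
  moreover have "y * 2 ^ b \<le> real j + 1"
  proof (cases "nat \<lfloor>y * 2 ^ b\<rfloor> \<le> 2 ^ b - 1")
    case True
    then show ?thesis using y unfolding j_def by (simp add: of_nat_nat)
  next
    case False
    then have "real j + 1 = 2 ^ b" unfolding j_def by (simp add: of_nat_diff)
    then show ?thesis using y by simp
  qed
  ultimately have "\<bar>y * 2 ^ b - real j\<bar> \<le> 1" by (simp add: abs_le_iff)
  then have "\<bar>y * 2 ^ b - real j\<bar> / 2 ^ b \<le> 1 / 2 ^ b"
    by (intro divide_right_mono) auto
  moreover have "y - real j / 2 ^ b = (y * 2 ^ b - real j) / 2 ^ b"
    by (simp add: field_simps)
  ultimately have "\<bar>y - real j / 2 ^ b\<bar> \<le> 1 / 2 ^ b"
    by (simp add: abs_divide)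
  moreover have "zigzag (2 ^ b + j) = (if even b then real j / 2 ^ b else 1 - real j / 2 ^ b)"
    using zigzag_block[of b "2 ^ b + j"] j by (simp add: Let_def)
  ultimately have "\<bar>z - zigzag (2 ^ b + j)\<bar> \<le> 1 / 2 ^ b"
    unfolding y_def by (auto split: if_splits)
  then show ?thesis using j by (intro bexI[of _ "2 ^ b + j"]) auto
qed

lemma sum_Suc_sq_div_pow2_le: "(\<Sum>j<n. (1 + real j)\<^sup>2 / 2 ^ j) \<le> 12"
proof -
  have "(\<Sum>j<n. (1 + real j)\<^sup>2 / 2 ^ j) = 12 - 2 * (real n ^ 2 + 4 * real n + 6) / 2 ^ n"
  proof (induction n)
    case (Suc n)
    have "(\<Sum>j<Suc n. (1 + real j)\<^sup>2 / 2 ^ j)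
        = 12 - 2 * (real n ^ 2 + 4 * real n + 6) / 2 ^ n + (1 + real n)\<^sup>2 / 2 ^ n"
      using Suc.IH by simp
    also have "\<dots> = 12 - 2 * (real (Suc n) ^ 2 + 4 * real (Suc n) + 6) / 2 ^ Suc n"
      by (simp add: field_simps power2_eq_square)
    finally show ?case .
  qed simp
  moreover have "0 \<le> 2 * (real n ^ 2 + 4 * real n + 6) / 2 ^ n" by simp
  ultimately show ?thesis by linarith
qed

lemma sum_inverse_pow4_le: "(\<Sum>j<n. 1 / (4::real) ^ j) \<le> 2"
proof -
  have "(\<Sum>j<n. 1 / (4::real) ^ j) = (\<Sum>j<n. (1/4) ^ j)" by (simp add: power_one_over)
  also have "\<dots> = ((1/4) ^ n - 1) / (1/4 - 1)" by (rule geometric_sum) simp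
  also have "\<dots> \<le> 2" by (simp add: field_simps)
  finally show ?thesis .
qed

lemma double_le_pow2: "2 * n \<le> (2::nat) ^ n"
proof (induction n)
  case (Suc n)
  show ?case
  proof (cases "n = 0")
    case False
    then have "2 \<le> (2::nat) ^ n" using power_increasing[of 1 n "2::nat"] by simp
    with Suc show ?thesis by simp
  qed simp
qed simp

lemma floor_double: "\<lfloor>2 * z\<rfloor> = 2 * \<lfloor>z\<rfloor> + (if odd \<lfloor>2 * z\<rfloor> then 1 else 0)"
  for z :: real
proof -
  have "2 * \<lfloor>z\<rfloor> \<le> \<lfloor>2 * z\<rfloor>" "\<lfloor>2 * z\<rfloor> \<le> 2 * \<lfloor>z\<rfloor> + 1"
    by (simp_all add: le_floor_iff floor_le_iff) linarith+
  moreover have "\<lfloor>2 * z\<rfloor> \<noteq> 2 * \<lfloor>z\<rfloor> + (if odd \<lfloor>2 * z\<rfloor> then 0 else 1)"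
    by auto
  ultimately show ?thesis by (auto split: if_splits)
qed

lemma binary_expansion_exists:
  fixes y :: real
  assumes "y \<in> {0..1}"
  obtains \<omega> where "(\<lambda>n. \<Sum>i<n. if \<omega> i then 1 / 2 ^ Suc i else 0) \<longlonglongrightarrow> y"
proof (cases "y = 1")
  case True
  have "(\<Sum>i<n. 1 / 2 ^ Suc i :: real) = 1 - (1/2) ^ n" for n
    by (induction n) (auto simp: field_simps)
  moreover have "(\<lambda>n. 1 - (1/2::real) ^ n) \<longlonglongrightarrow> 1"
    using tendsto_diff[OF tendsto_const LIMSEQ_realpow_zero[of "1/2::real"]] by simp
  ultimately show ?thesis using True that[of "\<lambda>_. True"] by simp
next
  case False
  with assms have y: "0 \<le> y" "y < 1" by auto
  define \<omega> where "\<omega> i = odd \<lfloor>y * 2 ^ Suc i\<rfloor>" for i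
  have partial: "(\<Sum>i<n. if \<omega> i then 1 / 2 ^ Suc i else 0) = of_int \<lfloor>y * 2 ^ n\<rfloor> / (2::real) ^ n" for n
  proof (induction n)
    case 0
    then show ?case using y by (simp add: floor_eq_iff)
  next
    case (Suc n)
    have "\<lfloor>y * 2 ^ Suc n\<rfloor> = 2 * \<lfloor>y * 2 ^ n\<rfloor> + (if \<omega> n then 1 else 0)"
      using floor_double[of "y * 2 ^ n"] unfolding \<omega>_def by (simp add: mult_ac)
    then show ?case using Suc by (auto simp: field_simps)
  qed
  have lower: "y - (1/2) ^ n \<le> of_int \<lfloor>y * 2 ^ n\<rfloor> / 2 ^ n" for n :: nat
  proof -
    have "(y * 2 ^ n - 1) / 2 ^ n \<le> of_int \<lfloor>y * 2 ^ n\<rfloor> / 2 ^ n"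
      by (intro divide_right_mono) (linarith, simp)
    then show ?thesis by (simp add: field_simps power_one_over)
  qed
  have upper: "of_int \<lfloor>y * 2 ^ n\<rfloor> / 2 ^ n \<le> y" for n :: nat
    by (simp add: divide_le_eq)
  have approx: "(\<lambda>n. y - (1/2::real) ^ n) \<longlonglongrightarrow> y"
    using tendsto_diff[OF tendsto_const LIMSEQ_realpow_zero[of "1/2::real"]] by simp
  have "(\<lambda>n. of_int \<lfloor>y * 2 ^ n\<rfloor> / (2::real) ^ n) \<longlonglongrightarrow> y"
    by (rule tendsto_sandwich[OF _ _ approx tendsto_const]) (use lower upper in \<open>auto intro: always_eventually\<close>)
  then show ?thesis using that[of \<omega>] unfolding partial by simp
qed

lemma dyadic_level_for_scale:
  fixes \<delta> :: real
  assumes "0 < \<delta>" "\<delta> < 1/4"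
  obtains b where "\<delta> \<le> (1/2) ^ (2 ^ Suc b + 2 * b)" and "ln (1 / \<delta>) \<le> 8 * 2 ^ b"
proof -
  define small_enough where "small_enough b \<longleftrightarrow> \<delta> \<le> (1/2::real) ^ (2 ^ Suc b + 2 * b)" for b
  have "small_enough 0" unfolding small_enough_def using assms by (simp add: power2_eq_square)
  obtain N where N: "(1/2::real) ^ N < \<delta>" using real_arch_pow_inv[OF assms(1), of "1/2"] by auto
  have "b \<le> N" if "small_enough b" for b
  proof -
    have "(1/2::real) ^ N < (1/2) ^ (2 ^ Suc b + 2 * b)" using N that unfolding small_enough_def by linarith
    then have "2 ^ Suc b + 2 * b < N" by (simp add: power_strict_decreasing_iff)
    moreover have "b < 2 ^ Suc b" by (induction b) auto
    ultimately show ?thesis by simp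
  qed
  then obtain b where b: "small_enough b" and max: "\<And>c. small_enough c \<Longrightarrow> c \<le> b"
    using Nat.ex_has_greatest_nat[of small_enough 0 N] \<open>small_enough 0\<close> by blast
  define T where "T = 2 ^ Suc (Suc b) + 2 * Suc b"
  have "\<not> small_enough (Suc b)" using max by fastforce
  then have "1 / \<delta> < 2 ^ T"
    using assms unfolding small_enough_def T_def by (simp add: power_one_over field_simps)
  then have "ln (1 / \<delta>) < real T * ln 2"
    using assms by (simp add: ln_less_cancel_iff ln_realpow[symmetric])
  also have "\<dots> \<le> real T" using ln_2_less_1 mult_left_mono[of "ln 2" 1 "real T"] by simp
  also have "real T \<le> 8 * 2 ^ b"
  proof -
    have "(1::nat) \<le> 2 ^ b" by simp
    moreover have "T = 4 * 2 ^ b + 2 * b + 2" unfolding T_def by simp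
    ultimately have "T \<le> 8 * 2 ^ b" using double_le_pow2[of b] by linarith
    then show ?thesis by (metis of_nat_le_iff of_nat_mult of_nat_numeral of_nat_power)
  qed
  finally show ?thesis using that b unfolding small_enough_def by simp
qed

section \<open>Bands and vertical thickenings\<close>

definition graph_band :: "real set \<Rightarrow> (real \<Rightarrow> real) \<Rightarrow> real \<Rightarrow> (real \<times> real) set" where
  "graph_band I g r = {(u, y). u \<in> I \<and> \<bar>y - g u\<bar> \<le> r}"

lemma closed_graph_band:
  assumes "closed I" "continuous_on I g"
  shows "closed (graph_band I g r)"
proof -
  have "continuous_on (I \<times> UNIV) (\<lambda>p. \<bar>snd p - g (fst p)\<bar>)"
    by (intro continuous_intros continuous_on_compose2[OF assms(2)]) auto
  moreover have "graph_band I g r = (I \<times> UNIV) \<inter> (\<lambda>p. \<bar>snd p - g (fst p)\<bar>) -` {..r}"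
    unfolding graph_band_def by auto
  ultimately show ?thesis
    using continuous_closed_preimage[of "I \<times> UNIV" _ "{..r}"] assms(1) by (simp add: closed_Times)
qed

lemma emeasure_graph_band:
  assumes I: "I \<in> sets borel" and band: "graph_band I g r \<in> sets borel" and r: "0 \<le> r"
  shows "emeasure lborel (graph_band I g r) = ennreal (2 * r) * emeasure lborel I"
proof -
  have "emeasure lborel (graph_band I g r) = emeasure (lborel \<Otimes>\<^sub>M lborel) (graph_band I g r)"
    by (simp add: lborel_prod)
  also have "\<dots> = (\<integral>\<^sup>+u. emeasure lborel (Pair u -` graph_band I g r) \<partial>lborel)"
    using band by (intro lborel.emeasure_pair_measure_alt) (simp only: lborel_prod sets_lborel)
  also have "\<dots> = (\<integral>\<^sup>+u. ennreal (2 * r) * indicator I u \<partial>lborel)"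
  proof (intro nn_integral_cong)
    fix u :: real
    have "Pair u -` graph_band I g r = (if u \<in> I then {g u - r..g u + r} else {})"
      unfolding graph_band_def by (auto simp: abs_le_iff)
    then show "emeasure lborel (Pair u -` graph_band I g r) = ennreal (2 * r) * indicator I u"
      using r by simp
  qed
  also have "\<dots> = ennreal (2 * r) * emeasure lborel I"
    using I by (simp add: nn_integral_cmult_indicator)
  finally show ?thesis .
qed

lemma vthick_graph_band_subset: "vthick (graph_band I g r) \<delta> \<subseteq> graph_band I g (r + \<delta>)"
  unfolding vthick_def graph_band_def by (auto simp: abs_le_iff)

lemma vthick_UN: "vthick (\<Union>i\<in>I. A i) \<delta> = (\<Union>i\<in>I. vthick (A i) \<delta>)"
  unfolding vthick_def by blast

lemma vthick_0: "vthick K 0 = K"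
proof
  show "vthick K 0 \<subseteq> K" unfolding vthick_def by (auto simp flip: zero_prod_def)
  show "K \<subseteq> vthick K 0"
  proof
    fix x assume "x \<in> K"
    then show "x \<in> vthick K 0"
      unfolding vthick_def by (intro CollectI exI[of _ x] exI[of _ 0]) (simp flip: zero_prod_def)
  qed
qed

lemma vthick_mono: "A \<subseteq> B \<Longrightarrow> vthick A \<delta> \<subseteq> vthick B \<delta>"
  unfolding vthick_def by fast

lemma compact_vthick:
  assumes "compact K" "0 \<le> \<delta>"
  shows "compact (vthick K \<delta>)"
proof -
  have eq: "vthick K \<delta> = {x + y | x y. x \<in> K \<and> y \<in> {0} \<times> {-\<delta>..\<delta>}}"
    unfolding vthick_def by auto
  show ?thesis
    unfolding eq by (intro compact_sums assms(1) compact_Times) auto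
qed

lemma sets_borel_vthick:
  assumes "compact K" "0 \<le> \<delta>"
  shows "vthick K \<delta> \<in> sets borel"
  using assms by (intro borel_closed compact_imp_closed compact_vthick)

definition contains_dilates :: "(real \<Rightarrow> real) \<Rightarrow> real \<Rightarrow> (real \<times> real) set \<Rightarrow> bool" where
  "contains_dilates f c K \<longleftrightarrow> (\<forall>a \<in> {1..2}. \<exists>x1 x2 \<alpha> \<beta>. 0 \<le> \<alpha> \<and> \<beta> \<le> 1 \<and> \<beta> - \<alpha> \<ge> c \<and>
     {(x1 + t, x2 + a * f t) | t. t \<in> {\<alpha>..\<beta>}} \<subseteq> K)"

section \<open>The construction\<close>

lemma abs_divide_le_if_ge_1: "1 \<le> a \<Longrightarrow> \<bar>q / a\<bar> \<le> \<bar>q\<bar>"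
  for a q :: real
  by (simp add: abs_divide divide_le_eq mult_le_cancel_left1 abs_mult)

locale dilate_kakeya =
  fixes f f' f'' :: "real \<Rightarrow> real" and m B0 B1 B2 B3 :: real
  assumes curvature_pos: "0 < m"
    and curvature: "\<And>x. x \<in> {0..1} \<Longrightarrow> m \<le> f'' x"
    and f_bound: "\<And>x. x \<in> {0..1} \<Longrightarrow> \<bar>f x\<bar> \<le> B0"
    and f'_bound: "\<And>x. x \<in> {0..1} \<Longrightarrow> \<bar>f' x\<bar> \<le> B1"
    and f_lipschitz: "B1-lipschitz_on {0..1} f"
    and f_taylor: "\<And>v w. v \<in> {0..1} \<Longrightarrow> w \<in> {0..1} \<Longrightarrow>
      \<bar>f v - f w - f' w * (v - w)\<bar> \<le> B2 * (v - w)\<^sup>2"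
    and f'_taylor: "\<And>v w. v \<in> {0..1} \<Longrightarrow> w \<in> {0..1} \<Longrightarrow>
      \<bar>f' v - f' w - f'' w * (v - w)\<bar> \<le> B3 * (v - w)\<^sup>2"
begin

lemma B0_nonneg: "0 \<le> B0" using f_bound[of 0] by auto
lemma B1_nonneg: "0 \<le> B1" using lipschitz_on_nonneg[OF f_lipschitz] .
lemma B2_nonneg: "0 \<le> B2" using f_taylor[of 1 0] by auto
lemma B3_nonneg: "0 \<le> B3" using f'_taylor[of 1 0] by auto

lemma continuous_on_f: "continuous_on {0..1} f"
  using lipschitz_on_continuous_on[OF f_lipschitz] .

definition shift_bound :: real where "shift_bound = B1 / m"
definition lift_bound :: real where "lift_bound = shift_bound * B1 + B0"
definition C1 :: real where "C1 = B2 + shift_bound * B3"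
definition C2 :: real where "C2 = 2 * B2 * shift_bound\<^sup>2 + B1 * shift_bound"

lemma shift_bound_nonneg: "0 \<le> shift_bound"
  unfolding shift_bound_def using B1_nonneg curvature_pos by simp

lemma lift_bound_nonneg: "0 \<le> lift_bound"
  unfolding lift_bound_def using shift_bound_nonneg B0_nonneg B1_nonneg by simp

lemma C1_nonneg: "0 \<le> C1"
  unfolding C1_def using B2_nonneg B3_nonneg shift_bound_nonneg by simp

lemma C2_nonneg: "0 \<le> C2"
  unfolding C2_def using B2_nonneg B1_nonneg shift_bound_nonneg by simp

(* Within each of the M blocks of dilations the curves are translated horizontally by at most
   shift_bound / M \<le> 1/8. *)
definition M :: nat where "M = nat \<lceil>8 * shift_bound\<rceil> + 1"

definition step :: "nat \<Rightarrow> real" where "step i = 1 / (real M * 2 ^ Suc i)"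
definition step_sum :: "nat \<Rightarrow> real" where "step_sum n = (\<Sum>i<n. step i)"

definition pivot :: "nat \<Rightarrow> real" where "pivot i = 1/8 + 3/4 * zigzag i"

lemma M_ge_1: "1 \<le> real M"
  unfolding M_def by simp

lemma shift_bound_le_M: "8 * shift_bound \<le> real M"
  unfolding M_def by linarith

lemma step_pos: "0 < step i"
  unfolding step_def using M_ge_1 by simp

lemma step_add: "step (k + j) = step k / 2 ^ j"
  unfolding step_def by (simp add: power_add)

lemma step_sum_eq: "step_sum n = (1 - 1 / 2 ^ n) / real M"
proof (induction n)
  case (Suc n)
  then show ?case using M_ge_1 by (simp add: step_sum_def step_def field_simps)
qed (simp add: step_sum_def)

lemma step_sum_le: "step_sum n \<le> 1 / real M"
  unfolding step_sum_eq using M_ge_1 by (simp add: divide_right_mono)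

lemma step_sum_Suc: "step_sum (Suc n) = step_sum n + step n"
  by (simp add: step_sum_def)

lemma shift_bound_step_sum: "shift_bound * step_sum n \<le> 1/8"
proof -
  have "shift_bound * step_sum n \<le> shift_bound / real M"
    using mult_left_mono[OF step_sum_le shift_bound_nonneg] by simp
  also have "\<dots> \<le> 1/8"
    using shift_bound_le_M M_ge_1 by (simp add: divide_le_eq)
  finally show ?thesis .
qed

lemma pivot_range: "pivot i \<in> {1/8..7/8}"
  unfolding pivot_def using zigzag_range[of i] by auto

lemma tangent_shift_le:
  assumes "w \<in> {0..1}"
  shows "\<bar>f' w / f'' w\<bar> \<le> shift_bound"
proof -
  have "m \<le> f'' w" using curvature assms .
  then have "\<bar>f' w / f'' w\<bar> = \<bar>f' w\<bar> / f'' w" using curvature_pos by (simp add: abs_divide)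
  also have "\<dots> \<le> B1 / m"
    using f'_bound[OF assms] \<open>m \<le> f'' w\<close> curvature_pos B1_nonneg by (intro frac_le) auto
  finally show ?thesis unfolding shift_bound_def .
qed

lemma tangent_lift_le:
  assumes "w \<in> {0..1}"
  shows "\<bar>f' w / f'' w * f' w - f w\<bar> \<le> lift_bound"
proof -
  have "\<bar>f' w / f'' w * f' w - f w\<bar> \<le> \<bar>f' w / f'' w\<bar> * \<bar>f' w\<bar> + \<bar>f w\<bar>"
    by (metis abs_mult abs_triangle_ineq4)
  also have "\<dots> \<le> shift_bound * B1 + B0"
    using tangent_shift_le[OF assms] f'_bound[OF assms] f_bound[OF assms] shift_bound_nonneg
    by (intro add_mono mult_mono) auto
  finally show ?thesis unfolding lift_bound_def .
qed

(* With q = f' w / f'' w the function v \<mapsto> f v - q f' v is stationary at v = w; this is the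
   contact that the rotation below preserves. *)
lemma tangency_defect_le:
  assumes v: "v \<in> {0..1}" and w: "w \<in> {0..1}"
  shows "\<bar>f v - f w - f' w / f'' w * (f' v - f' w)\<bar> \<le> C1 * (v - w)\<^sup>2"
proof -
  define q where "q = f' w / f'' w"
  have tangent: "f' w = q * f'' w"
    unfolding q_def using curvature[OF w] curvature_pos by simp
  have "f v - f w - q * (f' v - f' w)
      = (f v - f w - f' w * (v - w)) - q * (f' v - f' w - f'' w * (v - w))"
    by (simp add: tangent algebra_simps)
  also have "\<bar>\<dots>\<bar> \<le> \<bar>f v - f w - f' w * (v - w)\<bar> + \<bar>q\<bar> * \<bar>f' v - f' w - f'' w * (v - w)\<bar>"
    by (simp add: abs_mult[symmetric] abs_triangle_ineq4)
  also have "\<dots> \<le> B2 * (v - w)\<^sup>2 + shift_bound * (B3 * (v - w)\<^sup>2)"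
    using f_taylor[OF v w] f'_taylor[OF v w] tangent_shift_le[OF w] shift_bound_nonneg
    unfolding q_def
    by (intro add_mono mult_mono) auto
  finally show ?thesis
    unfolding q_def C1_def by (simp add: algebra_simps)
qed

(* A state (a, x1, x2) stands for the curve u \<mapsto> x2 + a f (u - x1). Rotating it by h about the
   abscissa r raises the dilation to a + h and translates the curve so that, to first order in h,
   it still has contact of second order with the old curve at u = r. *)
definition rotation :: "real \<Rightarrow> real \<Rightarrow> real \<times> real \<times> real \<Rightarrow> real \<times> real \<times> real" where
  "rotation h r = (\<lambda>(a, x1, x2). let w = r - x1; q = f' w / f'' w in
     (a + h, x1 + h * (q / a), x2 + h * (q * f' w - f w)))"

definition height :: "real \<Rightarrow> real \<times> real \<times> real \<Rightarrow> real" where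
  "height u = (\<lambda>(a, x1, x2). x2 + a * f (u - x1))"

lemma rotation_eq:
  assumes a: "1 \<le> a" and x1: "\<bar>x1\<bar> \<le> 1/8" and r: "r \<in> {1/8..7/8}"
  obtains X Y where "rotation h r (a, x1, x2) = (a + h, x1 + h * X, x2 + h * Y)"
    and "\<bar>X\<bar> \<le> shift_bound" and "\<bar>Y\<bar> \<le> lift_bound"
proof -
  define w where "w = r - x1"
  define q where "q = f' w / f'' w"
  have w: "w \<in> {0..1}" using x1 r unfolding w_def by auto
  show ?thesis
  proof (rule that)
    show "rotation h r (a, x1, x2) = (a + h, x1 + h * (q / a), x2 + h * (q * f' w - f w))"
      unfolding rotation_def w_def q_def by (simp add: Let_def)
    show "\<bar>q / a\<bar> \<le> shift_bound"
      using abs_divide_le_if_ge_1[OF a, of q] tangent_shift_le[OF w] unfolding q_def by linarith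
    show "\<bar>q * f' w - f w\<bar> \<le> lift_bound"
      using tangent_lift_le[OF w] unfolding q_def .
  qed
qed

lemma height_rotation_diff_eq:
  assumes w_def: "w = r - x1" and v_def: "v = u - x1" and q_def: "q = f' w / f'' w"
    and v'_def: "v' = v - h * (q / a)" and a: "a \<noteq> 0"
  shows "height u (rotation h r (a, x1, x2)) - height u (a, x1, x2)
    = h * (f v - f w - q * (f' v - f' w)) + a * (f v' - f v - f' v * (v' - v)) + h * (f v' - f v)"
proof -
  have "rotation h r (a, x1, x2) = (a + h, x1 + h * (q / a), x2 + h * (q * f' w - f w))"
    unfolding rotation_def w_def q_def by (simp add: Let_def)
  then have "height u (rotation h r (a, x1, x2)) - height u (a, x1, x2)
      = h * (q * f' w - f w) + (a + h) * f v' - a * f v"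
    unfolding height_def v'_def v_def by (simp add: algebra_simps)
  also have "\<dots> = h * (f v - f w - q * (f' v - f' w)) + a * (f v' - f v - f' v * (v' - v)) + h * (f v' - f v)"
    unfolding v'_def using a by (simp add: algebra_simps)
  finally show ?thesis .
qed

lemma height_rotation_diff_le:
  assumes a: "1 \<le> a" "a \<le> 2" and h: "0 \<le> h" and x1: "\<bar>x1\<bar> + h * shift_bound \<le> 1/8"
    and r: "r \<in> {1/8..7/8}" and u: "u \<in> {1/8..7/8}"
  shows "\<bar>height u (rotation h r (a, x1, x2)) - height u (a, x1, x2)\<bar>
    \<le> C1 * h * (u - r)\<^sup>2 + C2 * h\<^sup>2"
proof -
  define w where "w = r - x1"
  define v where "v = u - x1"
  define q where "q = f' w / f'' w"
  define d where "d = h * (q / a)"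
  define v' where "v' = v - d"
  define L where "L = f v - f w - q * (f' v - f' w)"
  define E1 where "E1 = f v' - f v - f' v * (v' - v)"
  define E2 where "E2 = f v' - f v"
  have hs: "0 \<le> h * shift_bound" using h shift_bound_nonneg by simp
  then have w: "w \<in> {0..1}" and v: "v \<in> {0..1}"
    using x1 r u unfolding w_def v_def by (auto simp: abs_le_iff)
  have "\<bar>q / a\<bar> \<le> shift_bound"
    using abs_divide_le_if_ge_1[OF a(1), of q] tangent_shift_le[OF w] unfolding q_def by linarith
  then have "h * \<bar>q / a\<bar> \<le> h * shift_bound" using h by (rule mult_left_mono)
  then have d: "\<bar>d\<bar> \<le> h * shift_bound" unfolding d_def using h by (simp add: abs_mult)
  then have "\<bar>x1 + d\<bar> \<le> 1/8" using abs_triangle_ineq[of x1 d] x1 by linarith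
  then have v': "v' \<in> {0..1}" using u unfolding v'_def v_def abs_le_iff by auto
  have L: "\<bar>L\<bar> \<le> C1 * (u - r)\<^sup>2"
    using tangency_defect_le[OF v w] unfolding L_def q_def v_def w_def by simp
  have "\<bar>E1\<bar> \<le> B2 * d\<^sup>2"
    using f_taylor[OF v' v] unfolding E1_def v'_def by simp
  also have "\<dots> \<le> B2 * (h * shift_bound)\<^sup>2"
    using d hs B2_nonneg by (intro mult_left_mono) (simp_all add: power2_le_iff_abs_le)
  finally have E1: "\<bar>E1\<bar> \<le> B2 * (h * shift_bound)\<^sup>2" .
  have "\<bar>E2\<bar> \<le> B1 * \<bar>d\<bar>"
    using lipschitz_onD[OF f_lipschitz v' v] unfolding E2_def v'_def by (simp add: dist_real_def)
  also have "\<dots> \<le> B1 * (h * shift_bound)"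
    using d B1_nonneg by (rule mult_left_mono)
  finally have E2: "\<bar>E2\<bar> \<le> B1 * (h * shift_bound)" .
  have "\<bar>height u (rotation h r (a, x1, x2)) - height u (a, x1, x2)\<bar> = \<bar>h * L + a * E1 + h * E2\<bar>"
    using height_rotation_diff_eq[OF w_def v_def q_def v'_def[unfolded d_def]] a
    unfolding L_def E1_def E2_def v'_def d_def by simp
  also have "\<dots> \<le> h * \<bar>L\<bar> + a * \<bar>E1\<bar> + h * \<bar>E2\<bar>"
    using a h abs_triangle_ineq[of "h * L + a * E1" "h * E2"] abs_triangle_ineq[of "h * L" "a * E1"]
    by (simp add: abs_mult)
  also have "\<dots> \<le> h * (C1 * (u - r)\<^sup>2) + 2 * (B2 * (h * shift_bound)\<^sup>2) + h * (B1 * (h * shift_bound))"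
    using L E1 E2 a h by (intro add_mono mult_mono mult_left_mono) auto
  also have "\<dots> = C1 * h * (u - r)\<^sup>2 + C2 * h\<^sup>2"
    unfolding C2_def by (simp add: algebra_simps power2_eq_square)
  finally show ?thesis .
qed

primrec state :: "real \<Rightarrow> (nat \<Rightarrow> bool) \<Rightarrow> nat \<Rightarrow> real \<times> real \<times> real" where
  "state A \<omega> 0 = (A, 0, 0)"
| "state A \<omega> (Suc n) = (if \<omega> n then rotation (step n) (pivot n) (state A \<omega> n) else state A \<omega> n)"

lemma state_bounds:
  assumes "A \<ge> 1" and "state A \<omega> n = (a, x1, x2)"
  shows "A \<le> a \<and> a \<le> A + step_sum n \<and> \<bar>x1\<bar> \<le> shift_bound * step_sum n \<and>
    \<bar>x2\<bar> \<le> lift_bound * step_sum n"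
  using assms(2)
proof (induction n arbitrary: a x1 x2)
  case 0
  then show ?case by (simp add: step_sum_def)
next
  case (Suc n)
  obtain a0 y1 y2 where prev: "state A \<omega> n = (a0, y1, y2)" by (metis prod.exhaust)
  note IH = Suc.IH[OF prev]
  have growth: "shift_bound * step_sum n \<le> shift_bound * step_sum (Suc n)"
    "lift_bound * step_sum n \<le> lift_bound * step_sum (Suc n)" "step_sum n \<le> step_sum (Suc n)"
    using step_pos[of n] shift_bound_nonneg lift_bound_nonneg
    by (auto simp: step_sum_Suc intro: mult_left_mono)
  show ?case
  proof (cases "\<omega> n")
    case False
    then show ?thesis using Suc.prems prev IH growth by auto
  next
    case True
    have "1 \<le> a0" "\<bar>y1\<bar> \<le> 1/8"
      using IH assms(1) shift_bound_step_sum[of n] by auto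
    then obtain X Y where rot: "rotation (step n) (pivot n) (a0, y1, y2) = (a0 + step n, y1 + step n * X, y2 + step n * Y)"
      and X: "\<bar>X\<bar> \<le> shift_bound" and Y: "\<bar>Y\<bar> \<le> lift_bound"
      using rotation_eq pivot_range by blast
    have "\<bar>step n * X\<bar> \<le> shift_bound * step n" "\<bar>step n * Y\<bar> \<le> lift_bound * step n"
      using X Y step_pos[of n] by (auto simp: abs_mult mult.commute intro: mult_left_mono)
    moreover have "\<bar>y1 + step n * X\<bar> \<le> \<bar>y1\<bar> + \<bar>step n * X\<bar>" "\<bar>y2 + step n * Y\<bar> \<le> \<bar>y2\<bar> + \<bar>step n * Y\<bar>"
      by (rule abs_triangle_ineq)+
    moreover have "a = a0 + step n" "x1 = y1 + step n * X" "x2 = y2 + step n * Y"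
      using Suc.prems True prev rot by simp_all
    ultimately show ?thesis
      using IH step_pos[of n] unfolding step_sum_Suc distrib_left by (intro conjI) linarith+
  qed
qed

lemma state_dist_Suc_le:
  assumes "1 \<le> A"
  shows "norm (state A \<omega> (Suc n) - state A \<omega> n) \<le> (1 + shift_bound + lift_bound) * step n"
proof (cases "\<omega> n")
  case True
  obtain a x1 x2 where s: "state A \<omega> n = (a, x1, x2)" by (metis prod.exhaust)
  have "1 \<le> a" "\<bar>x1\<bar> \<le> 1/8"
    using state_bounds[OF assms s] shift_bound_step_sum[of n] assms by auto
  then obtain X Y where rot: "rotation (step n) (pivot n) (a, x1, x2) = (a + step n, x1 + step n * X, x2 + step n * Y)"
    and X: "\<bar>X\<bar> \<le> shift_bound" and Y: "\<bar>Y\<bar> \<le> lift_bound"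
    using rotation_eq pivot_range by blast
  have "norm (state A \<omega> (Suc n) - state A \<omega> n) = norm (step n, step n * X, step n * Y)"
    using True s rot by simp
  also have "\<dots> \<le> \<bar>step n\<bar> + (\<bar>step n * X\<bar> + \<bar>step n * Y\<bar>)"
    using norm_Pair_le[of "step n" "(step n * X, step n * Y)"] norm_Pair_le[of "step n * X" "step n * Y"]
    by simp
  also have "\<dots> \<le> (1 + shift_bound + lift_bound) * step n"
    using X Y step_pos[of n] by (simp add: abs_mult algebra_simps mult_left_mono add_mono)
  finally show ?thesis .
next
  case False
  then show ?thesis
    using step_pos[of n] shift_bound_nonneg lift_bound_nonneg by simp
qed

definition state_lim :: "real \<Rightarrow> (nat \<Rightarrow> bool) \<Rightarrow> real \<times> real \<times> real" where
  "state_lim A \<omega> = lim (state A \<omega>)"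

lemma state_LIMSEQ:
  assumes "1 \<le> A"
  shows "state A \<omega> \<longlonglongrightarrow> state_lim A \<omega>"
proof -
  have "step = (\<lambda>n. 1 / (2 * real M) * (1/2) ^ n)"
    unfolding step_def by (auto simp: fun_eq_iff field_simps)
  then have "summable step" by (simp add: summable_geometric)
  then have "convergent (state A \<omega>)"
    by (intro convergent_if_increments_summable[where c = "\<lambda>n. (1 + shift_bound + lift_bound) * step n",
          OF state_dist_Suc_le[OF assms]] summable_mult)
  then show ?thesis
    unfolding state_lim_def by (simp add: convergent_LIMSEQ_iff)
qed

lemma state_lim_bounds:
  assumes "1 \<le> A" and "state_lim A \<omega> = (a, x1, x2)"
  shows "A \<le> a \<and> a \<le> A + 1 / real M \<and> \<bar>x1\<bar> \<le> 1/8 \<and> \<bar>x2\<bar> \<le> lift_bound"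
proof -
  define S where "S = {A..A + 1 / real M} \<times> {-1/8..1/8::real} \<times> {-lift_bound..lift_bound}"
  have "state A \<omega> n \<in> S" for n
  proof -
    obtain a x1 x2 where s: "state A \<omega> n = (a, x1, x2)" by (metis prod.exhaust)
    have "step_sum n \<le> 1" using step_sum_le[of n] M_ge_1 by (simp add: divide_le_eq order_trans)
    then have "lift_bound * step_sum n \<le> lift_bound"
      using mult_left_mono[OF _ lift_bound_nonneg] by fastforce
    then show ?thesis
      using state_bounds[OF assms(1) s] step_sum_le[of n] shift_bound_step_sum[of n]
      unfolding S_def s by (auto simp: abs_le_iff)
  qed
  moreover have "closed S" unfolding S_def by (intro closed_Times closed_atLeastAtMost)
  ultimately have "state_lim A \<omega> \<in> S"
    using closed_sequentially state_LIMSEQ[OF assms(1)] by blast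
  then show ?thesis unfolding S_def assms(2) by (auto simp: abs_le_iff)
qed

lemma dilation_state: "fst (state A \<omega> n) = A + (\<Sum>i<n. if \<omega> i then step i else 0)"
  by (induction n) (auto simp: rotation_def Let_def split: prod.split)

lemma height_eq: "height u p = snd (snd p) + fst p * f (u - fst (snd p))"
  by (simp add: height_def split: prod.split)

lemma height_state_LIMSEQ:
  assumes A: "1 \<le> A" and u: "u \<in> {1/8..7/8}"
  shows "(\<lambda>n. height u (state A \<omega> n)) \<longlonglongrightarrow> height u (state_lim A \<omega>)"
proof -
  note lim = state_LIMSEQ[OF A]
  have shift: "(\<lambda>n. u - fst (snd (state A \<omega> n))) \<longlonglongrightarrow> u - fst (snd (state_lim A \<omega>))"
    by (intro tendsto_intros lim)
  have in01: "u - fst (snd p) \<in> {0..1}" if "\<bar>fst (snd p)\<bar> \<le> 1/8" for p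
    using u that by (auto simp: abs_le_iff)
  have "u - fst (snd (state_lim A \<omega>)) \<in> {0..1}"
  proof (rule in01)
    obtain a x1 x2 where "state_lim A \<omega> = (a, x1, x2)" by (metis prod.exhaust)
    then show "\<bar>fst (snd (state_lim A \<omega>))\<bar> \<le> 1/8" using state_lim_bounds[OF A] by simp
  qed
  moreover have "u - fst (snd (state A \<omega> n)) \<in> {0..1}" for n
  proof (rule in01)
    obtain a x1 x2 where "state A \<omega> n = (a, x1, x2)" by (metis prod.exhaust)
    then show "\<bar>fst (snd (state A \<omega> n))\<bar> \<le> 1/8"
      using state_bounds[OF A] shift_bound_step_sum[of n] by fastforce
  qed
  ultimately have "(\<lambda>n. f (u - fst (snd (state A \<omega> n)))) \<longlonglongrightarrow> f (u - fst (snd (state_lim A \<omega>)))"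
    by (intro continuous_on_tendsto_compose[OF continuous_on_f shift]) auto
  then show ?thesis
    unfolding height_eq by (intro tendsto_intros lim)
qed

definition step_error :: "nat \<Rightarrow> real \<Rightarrow> real" where
  "step_error i u = C1 * step i * (u - pivot i)\<^sup>2 + C2 * (step i)\<^sup>2"

lemma height_state_Suc_diff_le:
  assumes A: "A \<in> {1..2 - 1 / real M}" and u: "u \<in> {1/8..7/8}"
  shows "\<bar>height u (state A \<omega> (Suc n)) - height u (state A \<omega> n)\<bar> \<le> step_error n u"
proof (cases "\<omega> n")
  case True
  obtain a x1 x2 where s: "state A \<omega> n = (a, x1, x2)" by (metis prod.exhaust)
  have "A \<ge> 1" using A by simp
  from state_bounds[OF this s] have "1 \<le> a" "a \<le> 2" "\<bar>x1\<bar> + step n * shift_bound \<le> 1/8"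
    using A step_sum_le[of n] shift_bound_step_sum[of "Suc n"] unfolding step_sum_Suc
    by (auto simp: algebra_simps)
  then show ?thesis
    using height_rotation_diff_le[OF _ _ less_imp_le[OF step_pos] _ pivot_range u] True s
    unfolding step_error_def by simp
next
  case False
  then show ?thesis unfolding step_error_def using C1_nonneg C2_nonneg step_pos[of n] by simp
qed

lemma height_state_diff_le:
  assumes A: "A \<in> {1..2 - 1 / real M}" and u: "u \<in> {1/8..7/8}" and "k \<le> n"
  shows "\<bar>height u (state A \<omega> n) - height u (state A \<omega> k)\<bar> \<le> (\<Sum>i\<in>{k..<n}. step_error i u)"
  using \<open>k \<le> n\<close>
proof (induction n rule: dec_induct)
  case (step n)
  have "\<bar>height u (state A \<omega> (Suc n)) - height u (state A \<omega> k)\<bar>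
      \<le> \<bar>height u (state A \<omega> (Suc n)) - height u (state A \<omega> n)\<bar>
        + \<bar>height u (state A \<omega> n) - height u (state A \<omega> k)\<bar>"
    by linarith
  also have "\<dots> \<le> step_error n u + (\<Sum>i\<in>{k..<n}. step_error i u)"
    using height_state_Suc_diff_le[OF A u] step.IH by (rule add_mono)
  finally show ?case using step.hyps by (simp add: add.commute)
qed simp

definition radius :: "nat \<Rightarrow> real" where "radius b = (3/4) / 2 ^ b"

definition tolerance :: "nat \<Rightarrow> nat \<Rightarrow> real" where
  "tolerance b k = 12 * C1 * step k * (radius b)\<^sup>2 + 2 * C2 * (step k)\<^sup>2"

lemma pivot_diff_le:
  assumes "2 ^ b \<le> k"
  shows "\<bar>pivot (k + j) - pivot k\<bar> \<le> radius b * real j"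
proof -
  have "\<bar>pivot (k + j) - pivot k\<bar> = \<bar>3/4 * (zigzag (k + j) - zigzag k)\<bar>"
    by (rule arg_cong[where f = abs]) (simp add: pivot_def)
  also have "\<dots> = 3/4 * \<bar>zigzag (k + j) - zigzag k\<bar>"
    unfolding abs_mult by simp
  also have "\<dots> \<le> 3/4 * (real j / 2 ^ b)"
    using zigzag_diff_le[OF assms, of "k + j"] by simp
  finally show ?thesis unfolding radius_def by simp
qed

lemma step_error_shift_le:
  assumes k: "2 ^ b \<le> k" and u: "\<bar>u - pivot k\<bar> \<le> radius b"
  shows "step_error (k + j) u
    \<le> C1 * step k * (radius b)\<^sup>2 * ((1 + real j)\<^sup>2 / 2 ^ j) + C2 * (step k)\<^sup>2 * (1 / 4 ^ j)"
proof -
  have "\<bar>u - pivot (k + j)\<bar> \<le> \<bar>u - pivot k\<bar> + \<bar>pivot (k + j) - pivot k\<bar>"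
    using abs_triangle_ineq[of "u - pivot k" "pivot k - pivot (k + j)"] by (simp add: abs_minus_commute)
  also have "\<dots> \<le> radius b + radius b * real j"
    using u pivot_diff_le[OF k] by (rule add_mono)
  also have "\<dots> = \<bar>radius b * (1 + real j)\<bar>"
    unfolding radius_def by (simp add: distrib_left)
  finally have "\<bar>u - pivot (k + j)\<bar> \<le> \<bar>radius b * (1 + real j)\<bar>" .
  then have "C1 * step (k + j) * (u - pivot (k + j))\<^sup>2 \<le> C1 * step (k + j) * (radius b * (1 + real j))\<^sup>2"
    unfolding abs_le_square_iff using C1_nonneg step_pos[of "k + j"] by (intro mult_left_mono) auto
  also have "\<dots> = C1 * step k * (radius b)\<^sup>2 * ((1 + real j)\<^sup>2 / 2 ^ j)"
    unfolding step_add by (simp add: power_mult_distrib)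
  finally have "C1 * step (k + j) * (u - pivot (k + j))\<^sup>2 \<le> C1 * step k * (radius b)\<^sup>2 * ((1 + real j)\<^sup>2 / 2 ^ j)" .
  moreover have "C2 * (step (k + j))\<^sup>2 = C2 * (step k)\<^sup>2 * (1 / 4 ^ j)"
    unfolding step_add by (simp add: power_divide power_mult_distrib[symmetric] power2_eq_square)
  ultimately show ?thesis unfolding step_error_def by linarith
qed

lemma step_error_tail_le:
  assumes k: "2 ^ b \<le> k" and u: "\<bar>u - pivot k\<bar> \<le> radius b"
  shows "(\<Sum>i\<in>{k..<n}. step_error i u) \<le> tolerance b k"
proof (cases "k \<le> n")
  case True
  have "(\<Sum>i\<in>{k..<n}. step_error i u) = (\<Sum>j<n - k. step_error (k + j) u)"
    using True by (intro sum.reindex_bij_witness[of _ "\<lambda>j. k + j" "\<lambda>i. i - k"]) auto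
  also have "\<dots> \<le> (\<Sum>j<n - k. C1 * step k * (radius b)\<^sup>2 * ((1 + real j)\<^sup>2 / 2 ^ j)
                              + C2 * (step k)\<^sup>2 * (1 / 4 ^ j))"
    by (intro sum_mono step_error_shift_le[OF k u])
  also have "\<dots> = C1 * step k * (radius b)\<^sup>2 * (\<Sum>j<n - k. (1 + real j)\<^sup>2 / 2 ^ j)
                  + C2 * (step k)\<^sup>2 * (\<Sum>j<n - k. 1 / 4 ^ j)"
    by (simp add: sum.distrib sum_distrib_left)
  also have "\<dots> \<le> C1 * step k * (radius b)\<^sup>2 * 12 + C2 * (step k)\<^sup>2 * 2"
    using C1_nonneg C2_nonneg step_pos[of k]
    by (intro add_mono mult_left_mono sum_Suc_sq_div_pow2_le sum_inverse_pow4_le) auto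
  finally show ?thesis unfolding tolerance_def by (simp add: algebra_simps)
next
  case False
  then show ?thesis
    unfolding tolerance_def using C1_nonneg C2_nonneg step_pos[of k] by simp
qed

lemma height_lim_near_state:
  assumes A: "A \<in> {1..2 - 1 / real M}" and u: "u \<in> {1/8..7/8}"
    and k: "2 ^ b \<le> k" and near: "\<bar>u - pivot k\<bar> \<le> radius b"
  shows "\<bar>height u (state_lim A \<omega>) - height u (state A \<omega> k)\<bar> \<le> tolerance b k"
proof (rule LIMSEQ_le_const2)
  show "(\<lambda>n. \<bar>height u (state A \<omega> n) - height u (state A \<omega> k)\<bar>)
      \<longlonglongrightarrow> \<bar>height u (state_lim A \<omega>) - height u (state A \<omega> k)\<bar>"
    using A by (intro tendsto_intros height_state_LIMSEQ u) auto
  show "\<exists>N. \<forall>n\<ge>N. \<bar>height u (state A \<omega> n) - height u (state A \<omega> k)\<bar> \<le> tolerance b k"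
    using height_state_diff_le[OF A u] step_error_tail_le[OF k near] order_trans by blast
qed

definition window :: "nat \<Rightarrow> nat \<Rightarrow> real set" where
  "window b k = {1/8..7/8} \<inter> {pivot k - radius b..pivot k + radius b}"

definition block_start :: "nat \<Rightarrow> real" where "block_start j = 1 + real j / real M"

(* The k-th state only depends on \<omega> restricted to {..<k}, so at level b finitely many bands around
   finite-stage curves cover all limit curves: one for each block j, each k in the b-th sweep of
   the pivots, and each S \<subseteq> {..<k}. *)
definition cover :: "nat \<Rightarrow> real \<Rightarrow> (real \<times> real) set" where
  "cover b \<delta> = (\<Union>j<M. \<Union>k\<in>{2 ^ b..<2 ^ Suc b}. \<Union>S\<in>Pow {..<k}.
      graph_band (window b k) (\<lambda>u. height u (state (block_start j) (\<lambda>i. i \<in> S) k)) (tolerance b k + \<delta>))"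

definition lim_curve :: "real \<Rightarrow> (nat \<Rightarrow> bool) \<Rightarrow> (real \<times> real) set" where
  "lim_curve A \<omega> = (case state_lim A \<omega> of (a, x1, x2) \<Rightarrow> {(x1 + t, x2 + a * f t) | t. t \<in> {1/4..3/4}})"

definition curves :: "(real \<times> real) set" where
  "curves = (\<Union>j<M. \<Union>\<omega>. lim_curve (block_start j) \<omega>)"

lemma block_start_range:
  assumes "j < M"
  shows "block_start j \<in> {1..2 - 1 / real M}"
proof -
  have "real j + 1 \<le> real M" using assms of_nat_le_iff[of "Suc j" M] by simp
  then have "real j / real M + 1 / real M \<le> 1"
    using M_ge_1 by (simp add: add_divide_distrib[symmetric] divide_le_eq_1)
  then show ?thesis unfolding block_start_def by simp
qed

lemma state_cong: "(\<And>i. i < k \<Longrightarrow> \<omega> i = \<omega>' i) \<Longrightarrow> state A \<omega> k = state A \<omega>' k"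
  by (induction k) auto

lemma curves_subset_cover: "curves \<subseteq> cover b 0"
proof
  fix p assume "p \<in> curves"
  then obtain j \<omega> where j: "j < M" and p: "p \<in> lim_curve (block_start j) \<omega>"
    unfolding curves_def by blast
  define A where "A = block_start j"
  have A: "A \<in> {1..2 - 1 / real M}" using block_start_range[OF j] unfolding A_def .
  obtain a x1 x2 where lim: "state_lim A \<omega> = (a, x1, x2)" by (metis prod.exhaust)
  with p obtain t where t: "t \<in> {1/4..3/4}" and p: "p = (x1 + t, x2 + a * f t)"
    unfolding lim_curve_def A_def by auto
  have "\<bar>x1\<bar> \<le> 1/8" using state_lim_bounds[OF _ lim] A by simp
  then have u: "x1 + t \<in> {1/8..7/8}" using t by (auto simp: abs_le_iff)
  then obtain k where k: "k \<in> {2 ^ b..<2 ^ Suc b}" and near: "\<bar>(x1 + t - 1/8) / (3/4) - zigzag k\<bar> \<le> 1 / 2 ^ b"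
    using zigzag_dense[of "(x1 + t - 1/8) / (3/4)" b] by auto
  have "\<bar>x1 + t - pivot k\<bar> = \<bar>3/4 * ((x1 + t - 1/8) / (3/4) - zigzag k)\<bar>"
    by (rule arg_cong[where f = abs]) (simp add: pivot_def field_simps)
  also have "\<dots> = 3/4 * \<bar>(x1 + t - 1/8) / (3/4) - zigzag k\<bar>"
    unfolding abs_mult by simp
  finally have near: "\<bar>x1 + t - pivot k\<bar> \<le> radius b"
    using near unfolding radius_def by simp
  define S where "S = {i. i < k \<and> \<omega> i}"
  have "state A (\<lambda>i. i \<in> S) k = state A \<omega> k"
    by (rule state_cong) (simp add: S_def)
  moreover have "height (x1 + t) (state_lim A \<omega>) = x2 + a * f t"
    unfolding lim height_def by simp
  moreover have "\<bar>height (x1 + t) (state_lim A \<omega>) - height (x1 + t) (state A \<omega> k)\<bar> \<le> tolerance b k"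
    using height_lim_near_state[OF A u _ near, where \<omega> = \<omega>] k by simp
  ultimately have "p \<in> graph_band (window b k) (\<lambda>u. height u (state A (\<lambda>i. i \<in> S) k)) (tolerance b k + 0)"
    using u near p unfolding graph_band_def window_def by (auto simp: abs_le_iff)
  moreover have "S \<in> Pow {..<k}" unfolding S_def by auto
  ultimately show "p \<in> cover b 0"
    unfolding cover_def A_def using j k by blast
qed

lemma continuous_on_height_state:
  assumes "A \<in> {1..2 - 1 / real M}"
  shows "continuous_on (window b k) (\<lambda>u. height u (state A \<omega> k))"
proof -
  obtain a x1 x2 where s: "state A \<omega> k = (a, x1, x2)" by (metis prod.exhaust)
  have "\<bar>x1\<bar> \<le> 1/8" using state_bounds[OF _ s] shift_bound_step_sum[of k] assms by auto
  then have "(\<lambda>u. u - x1) ` window b k \<subseteq> {0..1}"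
    unfolding window_def by (auto simp: abs_le_iff)
  then have cont: "continuous_on (window b k) (\<lambda>u. f (u - x1))"
    by (intro continuous_on_compose2[OF continuous_on_f] continuous_intros)
  have "(\<lambda>u. height u (state A \<omega> k)) = (\<lambda>u. x2 + a * f (u - x1))"
    unfolding s height_def by simp
  then show ?thesis by (simp only:) (intro continuous_intros cont)
qed

lemma closed_cover: "closed (cover b \<delta>)"
  unfolding cover_def
  by (intro closed_UN finite_lessThan finite_atLeastLessThan finite_Pow_iff[THEN iffD2] ballI
      closed_graph_band continuous_on_height_state block_start_range)
    (auto simp: window_def)

lemma vthick_cover: "vthick (cover b 0) \<delta> \<subseteq> cover b \<delta>"
  unfolding cover_def vthick_UN by (intro UN_mono order_refl) (simp add: vthick_graph_band_subset)

lemma emeasure_band_le: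
  assumes A: "A \<in> {1..2 - 1 / real M}" and "0 \<le> \<delta>"
  shows "emeasure lborel (graph_band (window b k) (\<lambda>u. height u (state A \<omega> k)) (tolerance b k + \<delta>))
    \<le> ennreal (4 * radius b * (tolerance b k + \<delta>))"
proof -
  have tol: "0 \<le> tolerance b k + \<delta>"
    unfolding tolerance_def using C1_nonneg C2_nonneg step_pos[of k] \<open>0 \<le> \<delta>\<close> by simp
  have closed: "closed (window b k)" unfolding window_def by (intro closed_Int closed_atLeastAtMost)
  have "emeasure lborel (window b k) \<le> emeasure lborel {pivot k - radius b..pivot k + radius b}"
    by (rule emeasure_mono) (auto simp: window_def)
  also have "\<dots> = ennreal (2 * radius b)" by (simp add: radius_def)
  finally have window: "emeasure lborel (window b k) \<le> ennreal (2 * radius b)" .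
  have "emeasure lborel (graph_band (window b k) (\<lambda>u. height u (state A \<omega> k)) (tolerance b k + \<delta>))
      = ennreal (2 * (tolerance b k + \<delta>)) * emeasure lborel (window b k)"
    using closed_graph_band[OF closed continuous_on_height_state[OF A]] closed tol
    by (intro emeasure_graph_band) auto
  also have "\<dots> \<le> ennreal (2 * (tolerance b k + \<delta>)) * ennreal (2 * radius b)"
    by (intro mult_left_mono window) auto
  also have "\<dots> = ennreal (2 * (tolerance b k + \<delta>) * (2 * radius b))"
    using tol by (simp add: ennreal_mult'[symmetric])
  also have "\<dots> = ennreal (4 * radius b * (tolerance b k + \<delta>))"
    by (rule arg_cong[where f = ennreal]) (simp add: algebra_simps)
  finally show ?thesis .
qed

definition C_cover :: real where "C_cover = 11 * C1 + 3 * C2 + 3 * real M"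

lemma C_cover_pos: "0 < C_cover"
  unfolding C_cover_def using C1_nonneg C2_nonneg M_ge_1 by simp

(* For each k there are 2^k bands; as 2^k step k = 1 / (2 M) and 2^k \<delta> \<le> 4^-b, their total
   area is O(8^-b / M). *)
lemma band_area_sum_le:
  assumes k: "2 ^ b \<le> k" "k < 2 ^ Suc b" and \<delta>: "0 \<le> \<delta>" "\<delta> \<le> (1/2) ^ (2 ^ Suc b + 2 * b)"
  shows "2 ^ k * (4 * radius b * (tolerance b k + \<delta>)) \<le> C_cover / (real M * 2 ^ b * 4 ^ b)"
proof -
  define t :: real where "t = 2 ^ b"
  have t: "0 < t" "(4::real) ^ b = t * t" "(2::real) ^ (2 * b) = t * t" "radius b = 3 / (4 * t)"
    unfolding t_def radius_def by (simp_all add: power_mult_distrib[symmetric] power_mult mult.commute[of 2 b] power2_eq_square)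
  have k_step: "2 ^ k * step k = 1 / (2 * real M)" unfolding step_def by simp
  have step_le: "step k \<le> 1 / (t * t)"
  proof -
    have "step k \<le> 1 / 2 ^ Suc k" unfolding step_def using M_ge_1 by (simp add: divide_left_mono)
    also have "\<dots> \<le> 1 / 2 ^ (2 * b)"
      using double_le_pow2[of b] k by (intro divide_left_mono power_increasing) auto
    finally show ?thesis unfolding t .
  qed
  have \<delta>_le: "2 ^ k * \<delta> \<le> 1 / (t * t)"
  proof -
    have "2 ^ k * \<delta> \<le> 2 ^ (2 ^ Suc b) * (1/2) ^ (2 ^ Suc b + 2 * b)"
      using k \<delta> by (intro mult_mono power_increasing) auto
    also have "\<dots> = 1 / 2 ^ (2 * b)" by (simp add: power_add power_one_over)
    finally show ?thesis unfolding t .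
  qed
  have "2 ^ k * (4 * radius b * (tolerance b k + \<delta>))
      = 4 * radius b * (12 * C1 * (radius b)\<^sup>2 * (2 ^ k * step k) + 2 * C2 * step k * (2 ^ k * step k))
        + 4 * radius b * (2 ^ k * \<delta>)"
    unfolding tolerance_def by (simp add: algebra_simps power2_eq_square)
  also have "\<dots> = 4 * radius b * (6 * C1 * (radius b)\<^sup>2 / real M + C2 * step k / real M)
        + 4 * radius b * (2 ^ k * \<delta>)"
    unfolding k_step by (simp add: field_simps)
  also have "\<dots> \<le> 4 * radius b * (6 * C1 * (radius b)\<^sup>2 / real M + C2 * (1 / (t * t)) / real M)
        + 4 * radius b * (1 / (t * t))"
    using step_le \<delta>_le C1_nonneg C2_nonneg M_ge_1 t(1) unfolding t(4)
    by (intro add_mono mult_left_mono divide_right_mono) auto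
  also have "\<dots> = (3 * (27/8 * C1 + C2) + 3 * real M) / (real M * t * (t * t))"
    unfolding t(4) using t(1) M_ge_1 by (simp add: field_simps power2_eq_square)
  also have "\<dots> \<le> C_cover / (real M * t * (t * t))"
    unfolding C_cover_def using C1_nonneg t(1) M_ge_1 by (intro divide_right_mono) auto
  finally show ?thesis unfolding t(2) t_def by (simp add: mult.assoc)
qed

lemma emeasure_cover_le:
  assumes \<delta>: "0 \<le> \<delta>" "\<delta> \<le> (1/2) ^ (2 ^ Suc b + 2 * b)"
  shows "emeasure lborel (cover b \<delta>) \<le> ennreal (C_cover / 4 ^ b)"
proof -
  define E where "E = C_cover / (real M * 2 ^ b * 4 ^ b)"
  have E: "0 \<le> E" unfolding E_def using C_cover_pos by simp
  let ?band = "\<lambda>j k S. graph_band (window b k) (\<lambda>u. height u (state (block_start j) (\<lambda>i. i \<in> S) k)) (tolerance b k + \<delta>)"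
  have band_sets: "?band j k S \<in> sets lborel" if "j < M" for j k S
    using closed_graph_band[OF _ continuous_on_height_state[OF block_start_range[OF that]]]
    by (simp add: window_def closed_Int)
  have per_k: "emeasure lborel (\<Union>S\<in>Pow {..<k}. ?band j k S) \<le> ennreal E"
    if j: "j < M" and k: "k \<in> {2 ^ b..<2 ^ Suc b}" for j k
  proof -
    have "emeasure lborel (\<Union>S\<in>Pow {..<k}. ?band j k S) \<le> (\<Sum>S\<in>Pow {..<k}. emeasure lborel (?band j k S))"
      using band_sets[OF j] by (intro emeasure_subadditive_finite) auto
    also have "\<dots> \<le> (\<Sum>S\<in>Pow {..<k}. ennreal (4 * radius b * (tolerance b k + \<delta>)))"
      by (intro sum_mono emeasure_band_le block_start_range j \<delta>(1))
    also have "\<dots> = ennreal (2 ^ k * (4 * radius b * (tolerance b k + \<delta>)))"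
      using \<delta>(1) C1_nonneg C2_nonneg step_pos[of k]
      by (simp add: card_Pow ennreal_of_nat_eq_real_of_nat ennreal_mult'[symmetric] tolerance_def radius_def)
    also have "\<dots> \<le> ennreal E"
      unfolding E_def using k \<delta> by (intro ennreal_leI band_area_sum_le) auto
    finally show ?thesis .
  qed
  have "emeasure lborel (cover b \<delta>) \<le> (\<Sum>j<M. \<Sum>k\<in>{2 ^ b..<2 ^ Suc b}. emeasure lborel (\<Union>S\<in>Pow {..<k}. ?band j k S))"
  proof -
    have "emeasure lborel (cover b \<delta>) \<le> (\<Sum>j<M. emeasure lborel (\<Union>k\<in>{2 ^ b..<2 ^ Suc b}. \<Union>S\<in>Pow {..<k}. ?band j k S))"
      unfolding cover_def using band_sets by (intro emeasure_subadditive_finite) (auto intro!: sets.finite_UN)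
    also have "\<dots> \<le> (\<Sum>j<M. \<Sum>k\<in>{2 ^ b..<2 ^ Suc b}. emeasure lborel (\<Union>S\<in>Pow {..<k}. ?band j k S))"
      using band_sets by (intro sum_mono emeasure_subadditive_finite) (auto intro!: sets.finite_UN)
    finally show ?thesis .
  qed
  also have "\<dots> \<le> (\<Sum>j<M. \<Sum>k\<in>{2 ^ b..<2 ^ Suc b::nat}. ennreal E)"
    by (rule sum_mono, rule sum_mono, rule per_k) auto
  also have "\<dots> = ennreal (real M * 2 ^ b * E)"
    using E by (simp add: ennreal_of_nat_eq_real_of_nat ennreal_mult'[symmetric] mult.assoc)
  also have "real M * 2 ^ b * E = C_cover / 4 ^ b"
    unfolding E_def using M_ge_1 by simp
  finally show ?thesis .
qed

lemma dilation_state_lim: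
  assumes A: "1 \<le> A" and y: "(\<lambda>n. \<Sum>i<n. if \<omega> i then 1 / 2 ^ Suc i else 0) \<longlonglongrightarrow> y"
  shows "fst (state_lim A \<omega>) = A + y / real M"
proof -
  have "(\<lambda>n. fst (state A \<omega> n)) = (\<lambda>n. A + (\<Sum>i<n. if \<omega> i then 1 / 2 ^ Suc i else 0) / real M)"
    unfolding dilation_state step_def by (auto simp: fun_eq_iff sum_divide_distrib intro!: sum.cong)
  moreover have "(\<lambda>n. A + (\<Sum>i<n. if \<omega> i then 1 / 2 ^ Suc i else 0) / real M) \<longlonglongrightarrow> A + y / real M"
    using M_ge_1 by (intro tendsto_intros y) auto
  ultimately show ?thesis
    using tendsto_fst[OF state_LIMSEQ[OF A]] LIMSEQ_unique by metis
qed

lemma dilation_attained: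
  assumes a: "a \<in> {1..2}"
  obtains j \<omega> where "j < M" and "fst (state_lim (block_start j) \<omega>) = a"
proof -
  define j where "j = min (nat \<lfloor>(a - 1) * real M\<rfloor>) (M - 1)"
  have j: "j < M" unfolding j_def using M_ge_1 by linarith
  have "real j \<le> real (nat \<lfloor>(a - 1) * real M\<rfloor>)" unfolding j_def by simp
  also have "\<dots> \<le> (a - 1) * real M" using a by (simp add: of_nat_nat)
  finally have lower: "real j \<le> (a - 1) * real M" .
  have upper: "(a - 1) * real M \<le> real j + 1"
  proof (cases "nat \<lfloor>(a - 1) * real M\<rfloor> \<le> M - 1")
    case True
    then show ?thesis using a unfolding j_def by (simp add: of_nat_nat)
  next
    case False
    then have "real j + 1 = real M" unfolding j_def using M_ge_1 by (simp add: of_nat_diff)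
    then show ?thesis using a M_ge_1 by (simp add: mult_le_cancel_right1)
  qed
  define y where "y = (a - 1) * real M - real j"
  have "y \<in> {0..1}" unfolding y_def using lower upper by simp
  then obtain \<omega> where \<omega>: "(\<lambda>n. \<Sum>i<n. if \<omega> i then 1 / 2 ^ Suc i else 0) \<longlonglongrightarrow> y"
    by (rule binary_expansion_exists)
  have "fst (state_lim (block_start j) \<omega>) = block_start j + y / real M"
    using block_start_range[OF j] by (intro dilation_state_lim \<omega>) simp
  also have "\<dots> = a"
    unfolding block_start_def y_def using M_ge_1 by (simp add: field_simps)
  finally show ?thesis using that j by blast
qed

lemma bounded_curves: "bounded curves"
proof -
  define c where "c = lift_bound + 2 * B0"
  have "curves \<subseteq> {-1..1} \<times> {-c..c}"
  proof
    fix p assume "p \<in> curves"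
    then obtain j \<omega> where j: "j < M" and p: "p \<in> lim_curve (block_start j) \<omega>"
      unfolding curves_def by blast
    obtain a x1 x2 where lim: "state_lim (block_start j) \<omega> = (a, x1, x2)" by (metis prod.exhaust)
    with p obtain t where t: "t \<in> {1/4..3/4}" and p: "p = (x1 + t, x2 + a * f t)"
      unfolding lim_curve_def by auto
    have bounds: "1 \<le> a" "a \<le> 2" "\<bar>x1\<bar> \<le> 1/8" "\<bar>x2\<bar> \<le> lift_bound"
      using state_lim_bounds[OF _ lim] block_start_range[OF j] by auto
    have "\<bar>a * f t\<bar> \<le> 2 * B0"
      unfolding abs_mult using bounds f_bound[of t] t by (intro mult_mono) auto
    then show "p \<in> {-1..1} \<times> {-c..c}"
      using bounds t unfolding p c_def by (auto simp: abs_le_iff)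
  qed
  then show ?thesis by (rule bounded_subset[OF bounded_Times[OF bounded_closed_interval bounded_closed_interval]])
qed

lemma contains_dilates_closure_curves: "contains_dilates f (1/2) (closure curves)"
  unfolding contains_dilates_def
proof
  fix a :: real assume a: "a \<in> {1..2}"
  obtain j \<omega> where j: "j < M" and dil: "fst (state_lim (block_start j) \<omega>) = a"
    using dilation_attained[OF a] .
  obtain x1 x2 where "state_lim (block_start j) \<omega> = (a, x1, x2)"
    using dil by (metis prod.collapse)
  then have "{(x1 + t, x2 + a * f t) | t. t \<in> {1/4..3/4}} = lim_curve (block_start j) \<omega>"
    unfolding lim_curve_def by simp
  also have "\<dots> \<subseteq> curves" unfolding curves_def using j by blast
  also have "\<dots> \<subseteq> closure curves" by (rule closure_subset)
  finally have piece: "{(x1 + t, x2 + a * f t) | t. t \<in> {1/4..3/4}} \<subseteq> closure curves" .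
  show "\<exists>x1 x2 \<alpha> \<beta>. 0 \<le> \<alpha> \<and> \<beta> \<le> 1 \<and> \<beta> - \<alpha> \<ge> 1/2 \<and>
      {(x1 + t, x2 + a * f t) | t. t \<in> {\<alpha>..\<beta>}} \<subseteq> closure curves"
    by (rule exI[of _ x1], rule exI[of _ x2], rule exI[of _ "1/4"], rule exI[of _ "3/4"])
      (use piece in auto)
qed

lemma emeasure_vthick_closure_curves_le:
  assumes "0 \<le> \<delta>" "\<delta> \<le> (1/2) ^ (2 ^ Suc b + 2 * b)"
  shows "emeasure lebesgue (vthick (closure curves) \<delta>) \<le> ennreal (C_cover / 4 ^ b)"
proof -
  have "vthick (closure curves) \<delta> \<subseteq> cover b \<delta>"
    using vthick_mono[OF closure_minimal[OF curves_subset_cover closed_cover]] vthick_cover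
    by (rule subset_trans)
  moreover have "cover b \<delta> \<in> sets lborel" using closed_cover by simp
  ultimately have "emeasure lebesgue (vthick (closure curves) \<delta>) \<le> emeasure lborel (cover b \<delta>)"
    using emeasure_mono[of _ "cover b \<delta>" lebesgue] by (simp add: sets_completionI_sets)
  also have "\<dots> \<le> ennreal (C_cover / 4 ^ b)" using assms by (rule emeasure_cover_le)
  finally show ?thesis .
qed

lemma kakeya_set:
  obtains K where "compact K" and "K \<in> null_sets lebesgue" and "contains_dilates f (1/2) K"
    and "\<And>b \<delta>. 0 \<le> \<delta> \<Longrightarrow> \<delta> \<le> (1/2) ^ (2 ^ Suc b + 2 * b) \<Longrightarrow>
      emeasure lebesgue (vthick K \<delta>) \<le> ennreal (C_cover / 4 ^ b)"
proof
  show "compact (closure curves)" using bounded_curves by (simp add: compact_closure)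
  have "(\<lambda>b. ennreal (C_cover / 4 ^ b)) \<longlonglongrightarrow> ennreal 0"
  proof (intro tendsto_ennrealI)
    have "(\<lambda>b. C_cover * (1/4) ^ b) \<longlonglongrightarrow> C_cover * 0"
      by (intro tendsto_intros LIMSEQ_realpow_zero) auto
    then show "(\<lambda>b. C_cover / 4 ^ b) \<longlonglongrightarrow> 0" by (simp add: power_one_over)
  qed
  moreover have "\<exists>N. \<forall>b\<ge>N. emeasure lebesgue (closure curves) \<le> ennreal (C_cover / 4 ^ b)"
    using emeasure_vthick_closure_curves_le[of 0] by (simp add: vthick_0)
  ultimately have "emeasure lebesgue (closure curves) \<le> ennreal 0"
    by (rule LIMSEQ_le_const)
  then show "closure curves \<in> null_sets lebesgue"
    using borel_closed[OF closed_closure] by (simp add: null_sets_def sets_completionI_sets)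
qed (simp_all add: contains_dilates_closure_curves emeasure_vthick_closure_curves_le)

lemma kakeya_set_log:
  obtains K C where "compact K" and "K \<in> null_sets lebesgue" and "contains_dilates f (1/2) K"
    and "0 < C"
    and "\<And>\<delta>. 0 < \<delta> \<Longrightarrow> \<delta> < 1/4 \<Longrightarrow> emeasure lebesgue (vthick K \<delta>) \<le> ennreal (C * ln (1 / \<delta>) powr -2)"
proof -
  obtain K where K: "compact K" "K \<in> null_sets lebesgue" "contains_dilates f (1/2) K"
    and thick: "\<And>b \<delta>. 0 \<le> \<delta> \<Longrightarrow> \<delta> \<le> (1/2) ^ (2 ^ Suc b + 2 * b) \<Longrightarrow>
      emeasure lebesgue (vthick K \<delta>) \<le> ennreal (C_cover / 4 ^ b)"
    using kakeya_set by blast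
  have "emeasure lebesgue (vthick K \<delta>) \<le> ennreal (64 * C_cover * ln (1 / \<delta>) powr -2)"
    if \<delta>: "0 < \<delta>" "\<delta> < 1/4" for \<delta>
  proof -
    obtain b where b: "\<delta> \<le> (1/2) ^ (2 ^ Suc b + 2 * b)" "ln (1 / \<delta>) \<le> 8 * 2 ^ b"
      using dyadic_level_for_scale[OF \<delta>] .
    define L where "L = ln (1 / \<delta>)"
    have L: "0 < L" unfolding L_def using \<delta> by simp
    have "L\<^sup>2 \<le> (8 * 2 ^ b)\<^sup>2" using b(2) L unfolding L_def by (intro power_mono) auto
    also have "\<dots> = 64 * 4 ^ b" by (simp add: power2_eq_square power_mult_distrib[symmetric])
    finally have "C_cover / 4 ^ b \<le> 64 * C_cover / L\<^sup>2"
      using L C_cover_pos by (simp add: field_simps)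
    also have "\<dots> = 64 * C_cover * L powr -2"
      using L by (simp add: powr_minus_divide powr_realpow)
    finally have "ennreal (C_cover / 4 ^ b) \<le> ennreal (64 * C_cover * ln (1 / \<delta>) powr -2)"
      unfolding L_def by (rule ennreal_leI)
    with thick[OF _ b(1)] \<delta> show ?thesis by (meson less_imp_le order_trans)
  qed
  with K C_cover_pos show ?thesis by (intro that[of K "64 * C_cover"]) auto
qed

end

section \<open>Lower bounds for the maximal operators\<close>

lemma enn_powr_ennreal: "0 \<le> c \<Longrightarrow> enn_powr (ennreal c) r = ennreal (c powr r)"
  unfolding enn_powr_def by simp

lemma enn_powr_mono:
  assumes "x \<le> y" "0 \<le> r"
  shows "enn_powr x r \<le> enn_powr y r"
proof (cases "y = top")
  case False
  then have "x \<noteq> top" using assms(1) top.extremum_unique by auto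
  moreover have "enn2real x \<le> enn2real y" using assms(1) False by (simp add: enn2real_mono less_top)
  ultimately show ?thesis
    using False assms(2) unfolding enn_powr_def by (simp add: ennreal_leI powr_mono2)
qed (simp add: enn_powr_def)

lemma enn2real_ge_1: "1 \<le> p \<Longrightarrow> p \<noteq> top \<Longrightarrow> 1 \<le> enn2real p"
  using enn2real_mono[of 1 p] by (simp add: top.not_eq_extremum)

lemma Lp_norm_ge_const:
  assumes space: "emeasure M (space M) = 1" and c: "0 \<le> c"
    and h: "\<And>x. x \<in> space M \<Longrightarrow> ennreal c \<le> h x" and q: "1 \<le> q"
  shows "ennreal c \<le> Lp_norm M q h"
proof (cases "q = top")
  case True
  have "ennreal c \<le> d" if "AE x in M. h x \<le> d" for d
  proof (rule ccontr)
    assume less: "\<not> ennreal c \<le> d"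
    have "AE x in M. False"
      using that
    proof (rule AE_mp, intro AE_I2 impI)
      fix x assume "x \<in> space M" "h x \<le> d"
      then show False using h less order_trans by blast
    qed
    then show False
      using space AE_iff_measurable[OF sets.top, of M "\<lambda>x. False"] by simp
  qed
  then show ?thesis
    using True unfolding Lp_norm_def ess_sup_enn_def by (auto intro: Inf_greatest)
next
  case False
  define r where "r = enn2real q"
  have r: "1 \<le> r" unfolding r_def using enn2real_ge_1[OF q False] .
  have "ennreal (c powr r) = (\<integral>\<^sup>+x. ennreal (c powr r) \<partial>M)" using space by simp
  also have "\<dots> \<le> (\<integral>\<^sup>+x. enn_powr (h x) r \<partial>M)"
    using enn_powr_mono[OF h, of _ r] r c by (intro nn_integral_mono) (simp add: enn_powr_ennreal)
  finally have "enn_powr (ennreal (c powr r)) (1 / r) \<le> enn_powr (\<integral>\<^sup>+x. enn_powr (h x) r \<partial>M) (1 / r)"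
    using r by (intro enn_powr_mono) auto
  moreover have "enn_powr (ennreal (c powr r)) (1 / r) = ennreal c"
    using c r by (simp add: enn_powr_ennreal powr_powr)
  ultimately show ?thesis using False unfolding Lp_norm_def r_def by simp
qed

lemma Lp_norm_indicator:
  assumes "E \<in> sets M" "1 \<le> p" "p \<noteq> top"
  shows "Lp_norm M p (indicator E) = enn_powr (emeasure M E) (1 / enn2real p)"
proof -
  have "(\<lambda>x. enn_powr (indicator E x) (enn2real p)) = indicator E"
    using enn2real_ge_1[OF assms(2,3)] by (auto simp: fun_eq_iff indicator_def enn_powr_def)
  then show ?thesis unfolding Lp_norm_def using assms by simp
qed

lemma Lp_norm_top_indicator:
  assumes E: "E \<in> sets M" and pos: "emeasure M E \<noteq> 0"
  shows "Lp_norm M top (indicator E) = 1"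
proof -
  have "1 \<le> d" if "AE x in M. (indicator E x :: ennreal) \<le> d" for d
  proof (rule ccontr)
    assume less: "\<not> 1 \<le> d"
    have "AE x in M. x \<notin> E"
      using that
    proof (rule AE_mp, intro AE_I2 impI)
      fix x assume "indicator E x \<le> d"
      then show "x \<notin> E" using less by (cases "x \<in> E") simp_all
    qed
    moreover have "{x \<in> space M. \<not> x \<notin> E} = E"
      using sets.sets_into_space[OF E] by blast
    ultimately have "emeasure M E = 0"
      using AE_iff_measurable[OF E] by simp
    then show False using pos by simp
  qed
  moreover have "AE x in M. (indicator E x :: ennreal) \<le> 1"
    by (intro AE_I2) (simp add: indicator_def)
  ultimately have "Inf {d. AE x in M. (indicator E x :: ennreal) \<le> d} = 1"
    by (intro antisym[OF Inf_lower Inf_greatest]) auto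
  then show ?thesis unfolding Lp_norm_def ess_sup_enn_def by simp
qed

lemma nn_integral_lebesgue_on_ge:
  assumes "A \<subseteq> S" "A \<in> sets lebesgue" "S \<in> sets lebesgue" "0 \<le> c"
    and "\<And>t. t \<in> A \<Longrightarrow> ennreal c \<le> F t"
  shows "ennreal c * emeasure lebesgue A \<le> (\<integral>\<^sup>+t. F t \<partial>lebesgue_on S)"
proof -
  have "ennreal c * emeasure lebesgue A = (\<integral>\<^sup>+t. ennreal c * indicator A t \<partial>lebesgue)"
    using assms(2) by (simp add: nn_integral_cmult_indicator)
  also have "\<dots> \<le> (\<integral>\<^sup>+t. F t * indicator S t \<partial>lebesgue)"
    using assms(1,5) by (intro nn_integral_mono) (auto simp: indicator_def)
  also have "\<dots> = (\<integral>\<^sup>+t. F t \<partial>lebesgue_on S)"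
    using assms(3) by (simp add: nn_integral_restrict_space)
  finally show ?thesis .
qed

lemma emeasure_space_lebesgue_on_dilations: "emeasure (lebesgue_on {1..2::real}) (space (lebesgue_on {1..2})) = 1"
  by (simp add: emeasure_restrict_space space_restrict_space)

lemma Rop_ge:
  assumes piece: "{(x1 + t, x2 + a * f t) | t. t \<in> {\<alpha>..\<beta>}} \<subseteq> K"
    and \<alpha>\<beta>: "0 \<le> \<alpha>" "\<alpha> \<le> \<beta>" "\<beta> \<le> 1" and s: "0 \<le> s"
    and g: "\<And>p. p \<in> K \<Longrightarrow> s \<le> norm (g p)"
  shows "ennreal (s * (\<beta> - \<alpha>)) \<le> Rop f g a"
proof -
  have "ennreal s * emeasure lebesgue {\<alpha>..\<beta>}
      \<le> (\<integral>\<^sup>+t. ennreal (norm (g (x1 + t, x2 + a * f t))) \<partial>lebesgue_on {0..1})"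
    using piece \<alpha>\<beta> s by (intro nn_integral_lebesgue_on_ge ennreal_leI g) auto
  moreover have "ennreal s * emeasure lebesgue {\<alpha>..\<beta>} = ennreal (s * (\<beta> - \<alpha>))"
    using \<alpha>\<beta> s by (simp add: ennreal_mult)
  moreover have "(\<integral>\<^sup>+t. ennreal (norm (g (x1 + t, x2 + a * f t))) \<partial>lebesgue_on {0..1}) \<le> Rop f g a"
    unfolding Rop_def by (rule SUP_upper2[of "(x1, x2)"]) auto
  ultimately show ?thesis by simp
qed

lemma Rop_delta_indicator_vthick_ge:
  assumes piece: "{(x1 + t, x2 + a * f t) | t. t \<in> {\<alpha>..\<beta>}} \<subseteq> K"
    and \<alpha>\<beta>: "0 \<le> \<alpha>" "\<alpha> \<le> \<beta>" "\<beta> \<le> 1" and \<delta>: "0 < \<delta>"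
  shows "ennreal (\<beta> - \<alpha>) \<le> Rop_delta f \<delta> (\<lambda>x. complex_of_real (indicator (vthick K \<delta>) x)) a"
proof -
  define g where "g x = complex_of_real (indicator (vthick K \<delta>) x)" for x
  define fibre where "fibre t = (\<integral>\<^sup>+s. ennreal (norm (g (x1 + t, x2 + a * f t + s))) \<partial>lebesgue_on {-\<delta>..\<delta>})" for t
  have "ennreal (2 * \<delta>) \<le> fibre t" if t: "t \<in> {\<alpha>..\<beta>}" for t
  proof -
    have "(x1 + t, x2 + a * f t + s) \<in> vthick K \<delta>" if "s \<in> {-\<delta>..\<delta>}" for s
      using piece t that unfolding vthick_def by force
    then have "ennreal 1 * emeasure lebesgue {-\<delta>..\<delta>} \<le> fibre t"
      unfolding fibre_def g_def by (intro nn_integral_lebesgue_on_ge) auto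
    then show ?thesis using \<delta> by simp
  qed
  then have "ennreal (2 * \<delta>) * emeasure lebesgue {\<alpha>..\<beta>} \<le> (\<integral>\<^sup>+t. fibre t \<partial>lebesgue_on {0..1})"
    using \<alpha>\<beta> \<delta> by (intro nn_integral_lebesgue_on_ge) auto
  then have "ennreal (1 / (2 * \<delta>)) * ennreal (2 * \<delta> * (\<beta> - \<alpha>))
      \<le> ennreal (1 / (2 * \<delta>)) * (\<integral>\<^sup>+t. fibre t \<partial>lebesgue_on {0..1})"
    using \<alpha>\<beta> \<delta> by (intro mult_left_mono) (auto simp: ennreal_mult)
  moreover have "ennreal (1 / (2 * \<delta>)) * ennreal (2 * \<delta> * (\<beta> - \<alpha>)) = ennreal (\<beta> - \<alpha>)"
    using \<alpha>\<beta> \<delta> by (subst ennreal_mult[symmetric]) auto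
  moreover have "ennreal (1 / (2 * \<delta>)) * (\<integral>\<^sup>+t. fibre t \<partial>lebesgue_on {0..1}) \<le> Rop_delta f \<delta> g a"
    unfolding Rop_delta_def fibre_def by (rule SUP_upper2[of "(x1, x2)"]) auto
  ultimately show ?thesis unfolding g_def by simp
qed

lemma Rpq_ge_test:
  assumes g: "g \<in> Lp_test p" and low: "\<And>a. a \<in> {1..2} \<Longrightarrow> ennreal c \<le> Rop f g a"
    and c: "0 \<le> c" and q: "1 \<le> q"
  shows "ennreal c / Lp_norm lebesgue p (\<lambda>x. ennreal (norm (g x))) \<le> Rpq f p q"
proof -
  have "ennreal c \<le> Lp_norm (lebesgue_on {1..2}) q (Rop f g)"
    using emeasure_space_lebesgue_on_dilations c low q by (rule Lp_norm_ge_const) simp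
  then have "ennreal c / Lp_norm lebesgue p (\<lambda>x. ennreal (norm (g x)))
      \<le> Lp_norm (lebesgue_on {1..2}) q (Rop f g) / Lp_norm lebesgue p (\<lambda>x. ennreal (norm (g x)))"
    by (rule divide_right_mono_ennreal)
  also have "\<dots> \<le> Rpq f p q" unfolding Rpq_def using g by (rule SUP_upper)
  finally show ?thesis .
qed

lemma Rpq_delta_ge_test:
  assumes g: "g \<in> Lp_test p" and low: "\<And>a. a \<in> {1..2} \<Longrightarrow> ennreal c \<le> Rop_delta f \<delta> g a"
    and c: "0 \<le> c" and q: "1 \<le> q"
  shows "ennreal c / Lp_norm lebesgue p (\<lambda>x. ennreal (norm (g x))) \<le> Rpq_delta f p q \<delta>"
proof -
  have "ennreal c \<le> Lp_norm (lebesgue_on {1..2}) q (Rop_delta f \<delta> g)"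
    using emeasure_space_lebesgue_on_dilations c low q by (rule Lp_norm_ge_const) simp
  then have "ennreal c / Lp_norm lebesgue p (\<lambda>x. ennreal (norm (g x)))
      \<le> Lp_norm (lebesgue_on {1..2}) q (Rop_delta f \<delta> g) / Lp_norm lebesgue p (\<lambda>x. ennreal (norm (g x)))"
    by (rule divide_right_mono_ennreal)
  also have "\<dots> \<le> Rpq_delta f p q \<delta>" unfolding Rpq_delta_def using g by (rule SUP_upper)
  finally show ?thesis .
qed

lemma emeasure_vthick_ge:
  assumes piece: "{(x1 + t, x2 + a * f t) | t. t \<in> {\<alpha>..\<beta>}} \<subseteq> K"
    and \<alpha>\<beta>: "0 \<le> \<alpha>" "\<alpha> \<le> \<beta>" "\<beta> \<le> 1"
    and f: "continuous_on {0..1} f" and \<delta>: "0 \<le> \<delta>" and E: "vthick K \<delta> \<in> sets lebesgue"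
  shows "ennreal (2 * \<delta> * (\<beta> - \<alpha>)) \<le> emeasure lebesgue (vthick K \<delta>)"
proof -
  define I where "I = {x1 + \<alpha>..x1 + \<beta>}"
  define g where "g u = x2 + a * f (u - x1)" for u
  have "(\<lambda>u. u - x1) ` I \<subseteq> {0..1}" unfolding I_def using \<alpha>\<beta> by auto
  then have "continuous_on I g"
    unfolding g_def by (intro continuous_intros continuous_on_compose2[OF f])
  then have closed: "closed (graph_band I g \<delta>)" by (intro closed_graph_band) (simp add: I_def)
  have "graph_band I g \<delta> \<subseteq> vthick K \<delta>"
  proof
    fix p assume "p \<in> graph_band I g \<delta>"
    then obtain u y where p: "p = (u, y)" and u: "u \<in> I" and y: "\<bar>y - g u\<bar> \<le> \<delta>"
      unfolding graph_band_def by auto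
    have "(x1 + (u - x1), x2 + a * f (u - x1)) \<in> K" using piece u unfolding I_def by force
    then show "p \<in> vthick K \<delta>"
      unfolding vthick_def p g_def using y
      by (intro CollectI exI[of _ "(u, g u)"] exI[of _ "y - g u"]) (auto simp: g_def abs_le_iff)
  qed
  then have "emeasure lebesgue (graph_band I g \<delta>) \<le> emeasure lebesgue (vthick K \<delta>)"
    by (rule emeasure_mono[OF _ E])
  moreover have "emeasure lborel (graph_band I g \<delta>) = ennreal (2 * \<delta>) * ennreal (\<beta> - \<alpha>)"
    using closed \<delta> \<alpha>\<beta> by (subst emeasure_graph_band) (auto simp: I_def)
  ultimately show ?thesis using closed \<delta> \<alpha>\<beta> by (simp add: ennreal_mult)
qed

lemma emeasure_vthick_pos:
  assumes K: "compact K" and pieces: "contains_dilates f c K" and c: "0 < c"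
    and f: "continuous_on {0..1} f" and \<delta>: "0 < \<delta>"
  shows "emeasure lebesgue (vthick K \<delta>) \<noteq> 0"
proof -
  have E: "vthick K \<delta> \<in> sets lebesgue"
    using sets_borel_vthick[OF K] \<delta> by (simp add: sets_completionI_sets)
  have "(1::real) \<in> {1..2}" by simp
  then obtain x1 x2 \<alpha> \<beta> where \<alpha>\<beta>: "0 \<le> \<alpha>" "\<beta> \<le> 1" "c \<le> \<beta> - \<alpha>"
    and piece: "{(x1 + t, x2 + 1 * f t) | t. t \<in> {\<alpha>..\<beta>}} \<subseteq> K"
    using bspec[OF pieces[unfolded contains_dilates_def]] by blast
  have "ennreal (2 * \<delta> * (\<beta> - \<alpha>)) \<le> emeasure lebesgue (vthick K \<delta>)"
    using \<alpha>\<beta> c \<delta> by (intro emeasure_vthick_ge[OF piece _ _ _ f _ E]) auto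
  moreover have "0 < 2 * \<delta> * (\<beta> - \<alpha>)"
    using \<alpha>\<beta> c \<delta> by (intro mult_pos_pos) auto
  ultimately show ?thesis by (auto simp: ennreal_eq_0_iff)
qed

lemma Rpq_delta_ge_vthick:
  assumes K: "compact K" and pieces: "contains_dilates f c K" and c: "0 < c"
    and f: "continuous_on {0..1} f" and \<delta>: "0 < \<delta>"
    and fin: "emeasure lebesgue (vthick K \<delta>) \<noteq> top" and p: "1 \<le> p" and q: "1 \<le> q"
  shows "ennreal c / Lp_norm lebesgue p (indicator (vthick K \<delta>)) \<le> Rpq_delta f p q \<delta>"
proof -
  define g where "g x = complex_of_real (indicator (vthick K \<delta>) x)" for x
  have norm_g: "(\<lambda>x. ennreal (norm (g x))) = indicator (vthick K \<delta>)"
    unfolding g_def by (auto simp: fun_eq_iff indicator_def)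
  have borel: "vthick K \<delta> \<in> sets borel" using sets_borel_vthick[OF K] \<delta> by simp
  then have E: "vthick K \<delta> \<in> sets lebesgue" by (simp add: sets_completionI_sets)
  note pos = emeasure_vthick_pos[OF K pieces c f \<delta>]
  have "Lp_norm lebesgue p (indicator (vthick K \<delta>)) \<noteq> 0 \<and> Lp_norm lebesgue p (indicator (vthick K \<delta>)) < top"
  proof (cases "p = top")
    case True
    then show ?thesis using Lp_norm_top_indicator[OF E pos] by simp
  next
    case False
    then show ?thesis
      using Lp_norm_indicator[OF E p False] pos fin enn2real_ge_1[OF p False]
      by (auto simp: enn_powr_def ennreal_eq_0_iff enn2real_eq_0_iff less_top[symmetric])
  qed
  moreover have "g \<in> borel_measurable borel"
    unfolding g_def using borel by measurable
  ultimately have "g \<in> Lp_test p" by (simp add: Lp_test_def norm_g)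
  moreover have "ennreal c \<le> Rop_delta f \<delta> g a" if a: "a \<in> {1..2}" for a
  proof -
    obtain x1 x2 \<alpha> \<beta> where \<alpha>\<beta>: "0 \<le> \<alpha>" "\<beta> \<le> 1" "c \<le> \<beta> - \<alpha>"
      and piece: "{(x1 + t, x2 + a * f t) | t. t \<in> {\<alpha>..\<beta>}} \<subseteq> K"
      using bspec[OF pieces[unfolded contains_dilates_def] a] by blast
    have "ennreal c \<le> ennreal (\<beta> - \<alpha>)" using \<alpha>\<beta>(3) by (rule ennreal_leI)
    also have "\<dots> \<le> Rop_delta f \<delta> g a"
      unfolding g_def using \<alpha>\<beta> c \<delta> by (intro Rop_delta_indicator_vthick_ge[OF piece]) auto
    finally show ?thesis .
  qed
  ultimately show ?thesis
    using Rpq_delta_ge_test[of g p c f \<delta> q] c q unfolding norm_g by simp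
qed

lemma scaled_powr_le_inverse_powr:
  fixes \<mu> C L r c :: real
  assumes "0 < \<mu>" "\<mu> \<le> C * L powr -2" "0 < C" "0 < L" "1 \<le> r" "0 \<le> c"
  shows "c / C powr (1 / r) * L powr (2 / r) \<le> c / \<mu> powr (1 / r)"
proof -
  have "\<mu> powr (1 / r) \<le> (C * L powr -2) powr (1 / r)"
    using assms by (intro powr_mono2) auto
  also have "\<dots> = C powr (1 / r) * (L powr -2) powr (1 / r)"
    by (rule powr_mult)
  also have "(L powr -2) powr (1 / r) = L powr (- (2 / r))"
    unfolding powr_powr by simp
  also have "C powr (1 / r) * L powr (- (2 / r)) = C powr (1 / r) / L powr (2 / r)"
    by (simp add: powr_minus_divide)
  finally show ?thesis
    using assms by (simp add: field_simps mult_left_mono)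
qed

lemma Rpq_delta_log_lower_bound:
  assumes K: "compact K" and pieces: "contains_dilates f c K" and c: "0 < c"
    and f: "continuous_on {0..1} f" and C: "0 < C"
    and thick: "\<And>\<delta>. 0 < \<delta> \<Longrightarrow> \<delta> < 1/4 \<Longrightarrow> emeasure lebesgue (vthick K \<delta>) \<le> ennreal (C * ln (1 / \<delta>) powr -2)"
    and p: "1 \<le> p" and q: "1 \<le> q"
  shows "\<exists>c' > 0. \<exists>\<delta>0 > 0. \<forall>\<delta>. 0 < \<delta> \<and> \<delta> < \<delta>0 \<longrightarrow>
    Rpq_delta f p q \<delta> \<ge> ennreal (c' * ln (1 / \<delta>) powr (if p = top then 0 else 2 / enn2real p))"
proof -
  define r where "r = enn2real p"
  define c' where "c' = (if p = top then c else c / C powr (1 / r))"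
  have "ennreal (c' * ln (1 / \<delta>) powr (if p = top then 0 else 2 / enn2real p)) \<le> Rpq_delta f p q \<delta>"
    if \<delta>: "0 < \<delta>" "\<delta> < 1/4" for \<delta>
  proof -
    define L where "L = ln (1 / \<delta>)"
    have L: "0 < L" unfolding L_def using \<delta> by simp
    have E: "vthick K \<delta> \<in> sets lebesgue"
      using sets_borel_vthick[OF K] \<delta> by (simp add: sets_completionI_sets)
    note pos = emeasure_vthick_pos[OF K pieces c f \<delta>(1)]
    obtain \<mu> where \<mu>: "emeasure lebesgue (vthick K \<delta>) = ennreal \<mu>" "\<mu> \<le> C * L powr -2" "0 < \<mu>"
      using thick[OF \<delta>] pos C L unfolding L_def
      by (cases "emeasure lebesgue (vthick K \<delta>)" rule: ennreal_cases) (auto simp: ennreal_le_iff top_unique)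
    have bound: "ennreal c / Lp_norm lebesgue p (indicator (vthick K \<delta>)) \<le> Rpq_delta f p q \<delta>"
      using \<mu>(1) by (intro Rpq_delta_ge_vthick[OF K pieces c f \<delta>(1) _ p q]) auto
    show ?thesis
    proof (cases "p = top")
      case True
      then show ?thesis
        using bound Lp_norm_top_indicator[OF E pos] unfolding c'_def by (simp add: divide_ennreal_def)
    next
      case False
      have r: "1 \<le> r" unfolding r_def using enn2real_ge_1[OF p False] .
      have norm: "Lp_norm lebesgue p (indicator (vthick K \<delta>)) = ennreal (\<mu> powr (1 / r))"
        using Lp_norm_indicator[OF E p False] \<mu> unfolding r_def by (simp add: enn_powr_ennreal)
      have "c' * L powr (2 / r) \<le> c / \<mu> powr (1 / r)"
        using scaled_powr_le_inverse_powr[OF \<mu>(3,2) C L r] c False unfolding c'_def by simp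
      then have "ennreal (c' * L powr (2 / r)) \<le> ennreal (c / \<mu> powr (1 / r))"
        by (rule ennreal_leI)
      also have "\<dots> = ennreal c / ennreal (\<mu> powr (1 / r))"
        using \<mu>(3) c by (intro divide_ennreal[symmetric]) auto
      also have "\<dots> \<le> Rpq_delta f p q \<delta>"
        using bound unfolding norm .
      finally show ?thesis using False unfolding L_def r_def by simp
    qed
  qed
  moreover have "0 < c'" unfolding c'_def using C c by simp
  ultimately show ?thesis by (intro exI[of _ c'] conjI exI[of _ "1/4"]) auto
qed

lemma emeasure_unit_square: "emeasure lebesgue ({0..1::real} \<times> {0..1::real}) = 1"
proof -
  have "emeasure lborel ({0..1::real} \<times> {0..1::real}) = emeasure (lborel \<Otimes>\<^sub>M lborel) ({0..1::real} \<times> {0..1::real})"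
    by (simp add: lborel_prod)
  also have "\<dots> = 1" by (simp add: lborel.emeasure_pair_measure_Times)
  finally show ?thesis by (simp add: closed_Times)
qed

lemma Lp_norm_AE_indicator:
  assumes "AE x in M. h x = indicator B x" and "B \<in> sets M" "1 \<le> p" "p \<noteq> top"
  shows "Lp_norm M p h = enn_powr (emeasure M B) (1 / enn2real p)"
proof -
  have "(\<integral>\<^sup>+x. enn_powr (h x) (enn2real p) \<partial>M) = (\<integral>\<^sup>+x. enn_powr (indicator B x) (enn2real p) \<partial>M)"
    using assms(1) by (intro nn_integral_cong_AE) (erule eventually_mono, simp)
  then show ?thesis
    using Lp_norm_indicator[OF assms(2-4)] assms(4) unfolding Lp_norm_def by simp
qed

(* Adding a large multiple of the indicator of the null set K to a fixed test function leaves
   its L^p norm unchanged but makes R g arbitrarily large. *)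
lemma Rpq_eq_top:
  assumes K: "closed K" "K \<in> null_sets lebesgue" and pieces: "contains_dilates f c K" and c: "0 < c"
    and p: "1 \<le> p" "p < top" and q: "1 \<le> q"
  shows "Rpq f p q = top"
proof -
  define B where "B = {0..1::real} \<times> {0..1::real}"
  have B: "B \<in> sets borel" unfolding B_def by (simp add: closed_Times)
  have "of_nat n \<le> Rpq f p q" for n
  proof -
    define G where "G x = complex_of_real (indicator B x + real n / c * indicator K x)" for x
    have norm_G: "norm (G x) = indicator B x + real n / c * indicator K x" for x
    proof -
      have "0 \<le> indicator B x + real n / c * indicator K x" using c by (simp add: indicator_def)
      then show ?thesis unfolding G_def norm_of_real by simp
    qed
    have "AE x in lebesgue. ennreal (norm (G x)) = indicator B x"
      using AE_not_in[OF K(2)] by eventually_elim (simp add: norm_G indicator_def)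
    then have norm: "Lp_norm lebesgue p (\<lambda>x. ennreal (norm (G x))) = 1"
      using Lp_norm_AE_indicator[where M = lebesgue and B = B and p = p] B p emeasure_unit_square
      by (simp add: sets_completionI_sets B_def enn_powr_def)
    have "G \<in> borel_measurable borel"
      using B borel_closed[OF K(1)] unfolding G_def by measurable
    with norm have "G \<in> Lp_test p" unfolding Lp_test_def by simp
    moreover have "ennreal (real n) \<le> Rop f G a" if a: "a \<in> {1..2}" for a
    proof -
      obtain x1 x2 \<alpha> \<beta> where \<alpha>\<beta>: "0 \<le> \<alpha>" "\<beta> \<le> 1" "c \<le> \<beta> - \<alpha>"
        and piece: "{(x1 + t, x2 + a * f t) | t. t \<in> {\<alpha>..\<beta>}} \<subseteq> K"
        using bspec[OF pieces[unfolded contains_dilates_def] a] by blast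
      have "real n = real n / c * c" using c by simp
      also have "\<dots> \<le> real n / c * (\<beta> - \<alpha>)"
        using \<alpha>\<beta>(3) c by (intro mult_left_mono) auto
      finally have "ennreal (real n) \<le> ennreal (real n / c * (\<beta> - \<alpha>))" by (rule ennreal_leI)
      also have "\<dots> \<le> Rop f G a"
        using \<alpha>\<beta> c by (intro Rop_ge[OF piece]) (auto simp: norm_G indicator_def)
      finally show ?thesis .
    qed
    ultimately have "ennreal (real n) / 1 \<le> Rpq f p q"
      using Rpq_ge_test[of G p "real n" f q] q norm by simp
    then show ?thesis by (simp add: ennreal_of_nat_eq_real_of_nat divide_ennreal_def)
  qed
  then have "(SUP n. of_nat n :: ennreal) \<le> Rpq f p q" by (rule SUP_least)
  then show ?thesis by (simp add: ennreal_SUP_of_nat_eq_top top_unique)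
qed

lemma continuous_on_Icc_abs_bounded:
  fixes \<phi> :: "real \<Rightarrow> real"
  assumes "continuous_on {a..b} \<phi>"
  shows "\<exists>B. \<forall>x \<in> {a..b}. \<bar>\<phi> x\<bar> \<le> B"
  using compact_imp_bounded[OF compact_continuous_image[OF assms compact_Icc]]
  unfolding bounded_iff by (auto simp del: atLeastAtMost_iff)

lemma dilate_kakeya_if_derivatives:
  fixes f f' f'' f''' :: "real \<Rightarrow> real"
  assumes d1: "\<And>x. x \<in> {0..1} \<Longrightarrow> (f has_real_derivative f' x) (at x within {0..1})"
    and d2: "\<And>x. x \<in> {0..1} \<Longrightarrow> (f' has_real_derivative f'' x) (at x within {0..1})"
    and c2: "continuous_on {0..1} f''"
    and convex: "(INF x \<in> {0..1}. f'' x) > 0"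
    and d3: "\<And>x. x \<in> {0<..<1} \<Longrightarrow> (f'' has_real_derivative f''' x) (at x)"
    and d3b: "bounded (f''' ` {0<..<1})"
  obtains m B0 B1 B2 B3 where "dilate_kakeya f f' f'' m B0 B1 B2 B3"
proof -
  have interior: "at x within {0..1} = at x" if "x \<in> {0<..<1}" for x :: real
    using that by (intro at_within_interior) auto
  have d1': "(f has_real_derivative f' x) (at x)" if "x \<in> {0<..<1}" for x
    using d1[of x] interior[OF that] that by simp
  have d2': "(f' has_real_derivative f'' x) (at x)" if "x \<in> {0<..<1}" for x
    using d2[of x] interior[OF that] that by simp
  have cf: "continuous_on {0..1} f" and cf': "continuous_on {0..1} f'"
    using d1 d2 by (meson DERIV_continuous continuous_on_eq_continuous_within)+
  obtain B0 where B0: "\<And>x. x \<in> {0..1} \<Longrightarrow> \<bar>f x\<bar> \<le> B0"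
    using continuous_on_Icc_abs_bounded[OF cf] by blast
  obtain B1 where B1: "\<And>x. x \<in> {0..1} \<Longrightarrow> \<bar>f' x\<bar> \<le> B1"
    using continuous_on_Icc_abs_bounded[OF cf'] by blast
  obtain B2 where B2: "\<And>x. x \<in> {0..1} \<Longrightarrow> \<bar>f'' x\<bar> \<le> B2"
    using continuous_on_Icc_abs_bounded[OF c2] by blast
  obtain B3 where B3: "\<And>x. x \<in> {0<..<1} \<Longrightarrow> \<bar>f''' x\<bar> \<le> B3"
    using d3b unfolding bounded_iff by (auto simp del: greaterThanLessThan_iff)
  have lip1: "B1-lipschitz_on {0..1} f"
    using B1[of 0] by (intro lipschitz_on_Icc_if_deriv_bounded[OF cf d1'] B1) auto
  have lip2: "B2-lipschitz_on {0..1} f'"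
    using B2[of 0] by (intro lipschitz_on_Icc_if_deriv_bounded[OF cf' d2'] B2) auto
  have lip3: "B3-lipschitz_on {0..1} f''"
    using B3[of "1/2"] by (intro lipschitz_on_Icc_if_deriv_bounded[OF c2 d3] B3) auto
  define m where "m = (INF x \<in> {0..1}. f'' x)"
  have "bdd_below (f'' ` {0..1})"
  proof (rule bdd_belowI2)
    fix x :: real assume "x \<in> {0..1}"
    then show "- B2 \<le> f'' x" using B2[of x] by linarith
  qed
  then have curvature: "m \<le> f'' x" if "x \<in> {0..1}" for x
    unfolding m_def using that by (rule cINF_lower)
  show ?thesis
  proof (rule that, unfold_locales)
    show "0 < m" using convex unfolding m_def .
    show "\<bar>f v - f w - f' w * (v - w)\<bar> \<le> B2 * (v - w)\<^sup>2" if "v \<in> {0..1}" "w \<in> {0..1}" for v w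
      using taylor_remainder_le_if_deriv_lipschitz[OF cf d1' lip2 that] .
    show "\<bar>f' v - f' w - f'' w * (v - w)\<bar> \<le> B3 * (v - w)\<^sup>2" if "v \<in> {0..1}" "w \<in> {0..1}" for v w
      using taylor_remainder_le_if_deriv_lipschitz[OF cf' d2' lip3 that] .
  qed (use curvature B0 B1 lip1 in auto)
qed

theorem theorem1p3:
  fixes f f' f'' f''' :: "real \<Rightarrow> real"
  assumes d1: "\<And>x. x \<in> {0..1} \<Longrightarrow> (f has_real_derivative f' x) (at x within {0..1})"
    and d2: "\<And>x. x \<in> {0..1} \<Longrightarrow> (f' has_real_derivative f'' x) (at x within {0..1})"
    and c2: "continuous_on {0..1} f''"
    and d0: "f' 0 \<ge> 0"
    and convex: "(INF x \<in> {0..1}. f'' x) > 0"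
    and d3: "\<And>x. x \<in> {0<..<1} \<Longrightarrow> (f'' has_real_derivative f''' x) (at x)"
    and d3b: "bounded (f''' ` {0<..<1})"
    and key: "\<And>x. x \<in> {0<..<1} \<Longrightarrow> f' x * f''' x - (f'' x)\<^sup>2 \<le> 0"
  shows "(\<exists>K :: (real \<times> real) set. compact K \<and> K \<in> null_sets lebesgue \<and>
            (\<exists>c > 0. \<forall>a \<in> {1..2}. \<exists>x1 x2 \<alpha> \<beta>. 0 \<le> \<alpha> \<and> \<beta> \<le> 1 \<and> \<beta> - \<alpha> \<ge> c \<and>
                 {(x1 + t, x2 + a * f t) | t. t \<in> {\<alpha>..\<beta>}} \<subseteq> K) \<and>
            (\<exists>C :: real. \<exists>\<delta>0 > 0. \<forall>\<delta>. 0 < \<delta> \<and> \<delta> < \<delta>0 \<longrightarrow>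
                 emeasure lebesgue (vthick K \<delta>) \<le> ennreal (C * (ln (1 / \<delta>)) powr (-2))))
       \<and> (\<forall>p q :: ennreal. 1 \<le> p \<longrightarrow> 1 \<le> q \<longrightarrow>
            (\<exists>c > 0. \<exists>\<delta>0 > 0. \<forall>\<delta>. 0 < \<delta> \<and> \<delta> < \<delta>0 \<longrightarrow>
               Rpq_delta f p q \<delta> \<ge>
                 ennreal (c * (ln (1 / \<delta>)) powr (if p = top then 0 else 2 / enn2real p))))
       \<and> (\<forall>p q :: ennreal. 1 \<le> p \<longrightarrow> p < top \<longrightarrow> 1 \<le> q \<longrightarrow> Rpq f p q = top)"
proof -
  obtain m B0 B1 B2 B3 where "dilate_kakeya f f' f'' m B0 B1 B2 B3"
    using dilate_kakeya_if_derivatives[OF d1 d2 c2 convex d3 d3b] .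
  then interpret dilate_kakeya f f' f'' m B0 B1 B2 B3 .
  obtain K C where K: "compact K" "K \<in> null_sets lebesgue" and pieces: "contains_dilates f (1/2) K"
    and C: "0 < C"
    and thick: "\<And>\<delta>. 0 < \<delta> \<Longrightarrow> \<delta> < 1/4 \<Longrightarrow> emeasure lebesgue (vthick K \<delta>) \<le> ennreal (C * ln (1 / \<delta>) powr -2)"
    using kakeya_set_log by blast
  have thin: "\<exists>\<delta>0 > 0. \<forall>\<delta>. 0 < \<delta> \<and> \<delta> < \<delta>0 \<longrightarrow>
      emeasure lebesgue (vthick K \<delta>) \<le> ennreal (C * ln (1 / \<delta>) powr -2)"
    using thick by (intro exI[of _ "1/4"]) auto
  have lower: "\<exists>c > 0. \<exists>\<delta>0 > 0. \<forall>\<delta>. 0 < \<delta> \<and> \<delta> < \<delta>0 \<longrightarrow>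
      Rpq_delta f p q \<delta> \<ge> ennreal (c * ln (1 / \<delta>) powr (if p = top then 0 else 2 / enn2real p))"
    if "1 \<le> p" "1 \<le> q" for p q
    by (rule Rpq_delta_log_lower_bound[OF K(1) pieces _ continuous_on_f C]) (use thick that in auto)
  have infinite: "Rpq f p q = top" if "1 \<le> p" "p < top" "1 \<le> q" for p q
    by (rule Rpq_eq_top[OF compact_imp_closed[OF K(1)] K(2) pieces]) (use that in auto)
  have "(0::real) < 1/2" by simp
  with K pieces thin lower infinite show ?thesis
    unfolding contains_dilates_def by blast
qed

end
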